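(* Let $T$ be a complex torus, $\Gamma$ a finite subgroup of $\mathrm{Aut}(T)=\mathrm{Aut}_0(T)\ltimes t(T)$, $\mathbb T=T\setminus\Gamma\cdot\{0\}$, and $\pi:\mathbb T\to\mathbb T/\Gamma$ the canonical projection. Then the number of branch points of $\pi$ is $0$ if $\Gamma\subseteq t(T)$; $2$ if $\Gamma=C_\ell\ltimes1$ with $\ell\in\{3,4,6\}$, or $\Gamma=C_3\ltimes(C_2\times C_2)$; $3$ if $\Gamma=C_2\ltimes C_N$ ($N\ge1$).
   Context: $\mathrm{Aut}(T)$ is the group of biholomorphisms of $T$, $\mathrm{Aut}_0(T)$ the subgroup fixing $0$ (the maps $z\mapsto\epsilon z$ for roots of unity $\epsilon$ with $\epsilon\Lambda=\Lambda$, $T=\mathbb C/\Lambda$), and $t(T)$ the subgroup of translations. Writing $\Gamma=G\ltimes K$ means $G\subseteq\mathrm{Aut}_0(T)$, $K\subseteq t(T)$ and $\Gamma$ is generated by $G$ and $K$; $C_m$ denotes a cyclic group of order $m$ and $1$ the trivial group. A branch point of $\pi$ is the image of a point of $\mathbb T$ with nontrivial stabilizer in $\Gamma$. *)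

theory Defs
  imports Complex_Main "HOL-Library.FuncSet"
begin

definition lattice :: "complex \<Rightarrow> complex \<Rightarrow> complex set" where
  "lattice \<omega>1 \<omega>2 = {of_int m * \<omega>1 + of_int n * \<omega>2 | m n. True}"

definition periods_indep :: "complex \<Rightarrow> complex \<Rightarrow> bool" where
  "periods_indep \<omega>1 \<omega>2 \<longleftrightarrow> \<omega>1 \<noteq> 0 \<and> Im (\<omega>2 / \<omega>1) \<noteq> 0"

definition coset :: "complex set \<Rightarrow> complex \<Rightarrow> complex set" where
  "coset L z = (\<lambda>l. z + l) ` L"

definition torus :: "complex set \<Rightarrow> complex set set" where
  "torus L = range (coset L)"

definition aff :: "complex set \<Rightarrow> complex \<Rightarrow> complex \<Rightarrow> complex set \<Rightarrow> complex set" where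
  "aff L \<epsilon> b = (\<lambda>P\<in>torus L. (\<lambda>z. \<epsilon> * z + b) ` P)"

definition idT :: "complex set \<Rightarrow> complex set \<Rightarrow> complex set" where
  "idT L = aff L 1 0"

definition lattice_unit :: "complex set \<Rightarrow> complex \<Rightarrow> bool" where
  "lattice_unit L \<epsilon> \<longleftrightarrow> (\<exists>n>0. \<epsilon> ^ n = 1) \<and> (\<lambda>z. \<epsilon> * z) ` L = L"

definition Aut :: "complex set \<Rightarrow> (complex set \<Rightarrow> complex set) set" where
  "Aut L = {aff L \<epsilon> b | \<epsilon> b. lattice_unit L \<epsilon>}"

definition Aut0 :: "complex set \<Rightarrow> (complex set \<Rightarrow> complex set) set" where
  "Aut0 L = {aff L \<epsilon> 0 | \<epsilon>. lattice_unit L \<epsilon>}"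

definition transl :: "complex set \<Rightarrow> (complex set \<Rightarrow> complex set) set" where
  "transl L = {aff L 1 b | b. True}"

definition compT :: "complex set \<Rightarrow> (complex set \<Rightarrow> complex set) \<Rightarrow> (complex set \<Rightarrow> complex set)
    \<Rightarrow> (complex set \<Rightarrow> complex set)" where
  "compT L f g = compose (torus L) f g"

definition invT :: "complex set \<Rightarrow> (complex set \<Rightarrow> complex set) \<Rightarrow> (complex set \<Rightarrow> complex set)" where
  "invT L f = restrict (inv_into (torus L) f) (torus L)"

definition aut_subgroup :: "complex set \<Rightarrow> (complex set \<Rightarrow> complex set) set \<Rightarrow> bool" where
  "aut_subgroup L H \<longleftrightarrow> H \<subseteq> Aut L \<and> idT L \<in> H \<and>
     (\<forall>f\<in>H. \<forall>g\<in>H. compT L f g \<in> H) \<and> (\<forall>f\<in>H. invT L f \<in> H)"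

definition generated :: "complex set \<Rightarrow> (complex set \<Rightarrow> complex set) set \<Rightarrow> (complex set \<Rightarrow> complex set) set" where
  "generated L S = \<Inter> {H. aut_subgroup L H \<and> S \<subseteq> H}"

definition semidir :: "complex set \<Rightarrow> (complex set \<Rightarrow> complex set) set \<Rightarrow> (complex set \<Rightarrow> complex set) set
    \<Rightarrow> (complex set \<Rightarrow> complex set) set \<Rightarrow> bool" where
  "semidir L \<Gamma> G K \<longleftrightarrow> aut_subgroup L G \<and> aut_subgroup L K \<and> G \<subseteq> Aut0 L \<and> K \<subseteq> transl L
     \<and> \<Gamma> = generated L (G \<union> K)"

definition cyc :: "complex set \<Rightarrow> (complex set \<Rightarrow> complex set) \<Rightarrow> (complex set \<Rightarrow> complex set) set" where
  "cyc L g = {((compT L g) ^^ k) (idT L) | k. True}"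

definition cyclic_of_order :: "complex set \<Rightarrow> (complex set \<Rightarrow> complex set) set \<Rightarrow> nat \<Rightarrow> bool" where
  "cyclic_of_order L G m \<longleftrightarrow> (\<exists>g\<in>Aut L. G = cyc L g) \<and> finite G \<and> card G = m"

definition klein_four :: "complex set \<Rightarrow> (complex set \<Rightarrow> complex set) set \<Rightarrow> bool" where
  "klein_four L K \<longleftrightarrow> (\<exists>a\<in>Aut L. \<exists>b\<in>Aut L. K = {idT L, a, b, compT L a b} \<and> card K = 4 \<and>
      compT L a a = idT L \<and> compT L b b = idT L \<and> compT L a b = compT L b a)"

text \<open>Branch points: images in \<TT>/Gamma of points of \<TT> = T - Gamma.0 with nontrivial stabilizer,
  i.e. Gamma-orbits of such points.\<close>

definition orbit :: "(complex set \<Rightarrow> complex set) set \<Rightarrow> complex set \<Rightarrow> complex set set" where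
  "orbit \<Gamma> P = (\<lambda>\<gamma>. \<gamma> P) ` \<Gamma>"

definition punctured :: "complex set \<Rightarrow> (complex set \<Rightarrow> complex set) set \<Rightarrow> complex set set" where
  "punctured L \<Gamma> = torus L - orbit \<Gamma> (coset L 0)"

definition branch_points :: "complex set \<Rightarrow> (complex set \<Rightarrow> complex set) set \<Rightarrow> complex set set set" where
  "branch_points L \<Gamma> = {orbit \<Gamma> P | P. P \<in> punctured L \<Gamma> \<and> (\<exists>\<gamma>\<in>\<Gamma>. \<gamma> \<noteq> idT L \<and> \<gamma> P = P)}"

end

theory Submission
  imports Defs
begin

text \<open>
  Every group \<open>\<Gamma>\<close> occurring in the theorem is of the form
  \<open>{[z] \<mapsto> [u z + b] | u \<in> U, b \<in> B}\<close>, where \<open>U\<close> is a finite group of units preserving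
  the lattice \<open>L\<close> and \<open>B \<supseteq> L\<close> is a \<open>U\<close>-stable group. For such a group a point \<open>[z]\<close>
  avoids the orbit of \<open>0\<close> iff \<open>z \<notin> B\<close>, it has a nontrivial stabiliser iff \<open>(1 - u) z \<in> B\<close>
  for some \<open>u \<noteq> 1\<close> in \<open>U\<close>, and \<open>[z]\<close>, \<open>[w]\<close> lie in one orbit iff \<open>z - u w \<in> B\<close> for
  some \<open>u \<in> U\<close>; so the branch points are counted by exhibiting representatives.
  Translations have no fixed points. If \<open>U\<close> has order 3, 4 or 6, a shortest vector \<open>a\<close> of
  \<open>L\<close> gives \<open>L = \<int>a + \<int>a\<epsilon>\<close> with \<open>\<epsilon>\<close> a primitive cube or fourth root of unity, and the
  fixed points are the half periods and the points \<open>(2a + a\<epsilon>)/3\<close>, \<open>(a + 2a\<epsilon>)/3\<close>, which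
  fall into two orbits. If \<open>C\<^sub>3\<close> acts on a Klein four group of translations then
  \<open>B = L/2\<close>, again a hexagonal lattice. If \<open>C\<^sub>2\<close> acts on a cyclic group of translations
  generated by \<open>b\<close>, then \<open>B = L + \<int>b\<close> is a lattice (by a Hermite normal form argument) and
  the branch points are its three half periods.
\<close>

section \<open>Subgroups of the integers and roots of unity\<close>

lemma of_int_mult_closed:
  fixes B :: "'a::comm_ring_1 set"
  assumes "0 \<in> B" and diff: "\<And>x y. x \<in> B \<Longrightarrow> y \<in> B \<Longrightarrow> x - y \<in> B" and "x \<in> B"
  shows "of_int k * x \<in> B"
proof -
  have nat: "of_nat n * x \<in> B" for n
  proof (induction n)
    case (Suc n)
    have "of_nat (Suc n) * x = of_nat n * x - (0 - x)" by (simp add: algebra_simps)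
    moreover have "of_nat n * x - (0 - x) \<in> B" using Suc assms by blast
    ultimately show ?case by simp
  qed (use assms in simp)
  show ?thesis
  proof (cases "k \<ge> 0")
    case True
    then show ?thesis using nat[of "nat k"] by simp
  next
    case False
    then have "of_int k * x = 0 - of_nat (nat (- k)) * x" by simp
    then show ?thesis using nat assms by metis
  qed
qed

lemma int_subgroup_generator:
  fixes A :: "int set"
  assumes diff: "\<And>x y. x \<in> A \<Longrightarrow> y \<in> A \<Longrightarrow> x - y \<in> A" and "d \<in> A" "d > 0"
  obtains g where "g > 0" "g \<in> A" "\<And>x. x \<in> A \<Longrightarrow> g dvd x"
proof -
  define n where "n = (LEAST n::nat. n > 0 \<and> int n \<in> A)"
  have n: "n > 0" "int n \<in> A"
    using LeastI[of "\<lambda>n::nat. n > 0 \<and> int n \<in> A" "nat d"] assms(2,3) unfolding n_def by auto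
  have "int n dvd x" if "x \<in> A" for x
  proof -
    have "0 \<in> A" using diff[OF \<open>d \<in> A\<close> \<open>d \<in> A\<close>] by simp
    then have "x - of_int (x div int n) * int n \<in> A"
      using of_int_mult_closed[of A "int n" "x div int n"] diff n(2) that by simp
    then have "int (nat (x mod int n)) \<in> A" using n(1) by (simp add: minus_div_mult_eq_mod)
    moreover have "nat (x mod int n) < n" using n(1) by (simp add: nat_less_iff)
    ultimately have "nat (x mod int n) = 0"
      using not_less_Least[of "nat (x mod int n)" "\<lambda>n::nat. n > 0 \<and> int n \<in> A"] unfolding n_def
      by auto
    moreover have "x mod int n \<ge> 0" using n(1) by simp
    ultimately show ?thesis by (simp add: dvd_eq_mod_eq_0)
  qed
  then show thesis using that[of "int n"] n by simp
qed

lemma range_power_eq: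
  fixes x :: "'a::monoid_mult"
  assumes "x ^ n = 1" "n > 0"
  shows "range (\<lambda>k. x ^ k) = (\<lambda>k. x ^ k) ` {..<n}"
proof -
  have "x ^ k = x ^ (k mod n)" for k
    using assms(1) by (metis mult_div_mod_eq power_add power_mult power_one mult_1)
  then show ?thesis using assms(2) by (auto intro: rev_image_eqI[of "k mod n" for k])
qed

lemma card_range_power:
  fixes x :: "'a::field"
  assumes "x ^ n = 1" "n > 0" "card (range (\<lambda>k. x ^ k)) = l"
  shows "x ^ l = 1" "l > 0" "\<And>j. 0 < j \<Longrightarrow> j < l \<Longrightarrow> x ^ j \<noteq> 1"
proof -
  define m where "m = (LEAST m. 0 < m \<and> x ^ m = 1)"
  have m: "0 < m" "x ^ m = 1"
    using LeastI[of "\<lambda>m. 0 < m \<and> x ^ m = 1" n] assms unfolding m_def by auto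
  have less: "x ^ j \<noteq> 1" if "0 < j" "j < m" for j
    using not_less_Least[of j "\<lambda>m. 0 < m \<and> x ^ m = 1"] that unfolding m_def by auto
  have "x \<noteq> 0" using m by (metis power_0_left zero_neq_one less_irrefl)
  have "inj_on (\<lambda>k. x ^ k) {..<m}"
  proof (rule linorder_inj_onI)
    fix i j assume "i < j" "j \<in> {..<m}"
    then have "x ^ (j - i) \<noteq> 1" using less by simp
    moreover have "x ^ j = x ^ i * x ^ (j - i)" using \<open>i < j\<close> by (simp flip: power_add)
    ultimately show "x ^ i \<noteq> x ^ j" using \<open>x \<noteq> 0\<close> by auto
  qed auto
  then have "l = m" using assms(3) range_power_eq[OF m(2,1)] by (simp add: card_image)
  then show "x ^ l = 1" "l > 0" "\<And>j. 0 < j \<Longrightarrow> j < l \<Longrightarrow> x ^ j \<noteq> 1" using m less by auto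
qed

lemma square_root_of_unity:
  fixes x :: "'a::idom"
  shows "x\<^sup>2 = 1 \<Longrightarrow> x \<noteq> 1 \<Longrightarrow> x = -1"
  by (simp add: power2_eq_1_iff)

lemma cube_root_of_unity:
  fixes x :: "'a::idom"
  assumes "x ^ 3 = 1" "x \<noteq> 1"
  shows "x\<^sup>2 + x + 1 = 0"
proof -
  have "(x - 1) * (x\<^sup>2 + x + 1) = x ^ 3 - 1"
    by (simp add: power2_eq_square power3_eq_cube algebra_simps)
  then show ?thesis using assms by simp
qed

lemma quadratic_unit_root:
  fixes e :: complex
  assumes "e\<^sup>2 = of_real s * e - 1" "\<bar>s\<bar> < 2"
  shows "Re e = s / 2" "cmod e = 1" "Im e \<noteq> 0"
proof -
  have re: "(Re e)\<^sup>2 - (Im e)\<^sup>2 = s * Re e - 1" and im: "2 * Re e * Im e = s * Im e"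
    using arg_cong[OF assms(1), of Re] arg_cong[OF assms(1), of Im]
    by (simp_all add: power2_eq_square)
  have "\<bar>s\<bar>\<^sup>2 < 2\<^sup>2" using assms(2) by (intro power_strict_mono) auto
  then have "s\<^sup>2 < 4" by simp
  show "Im e \<noteq> 0"
  proof
    assume "Im e = 0"
    then have "(Re e - s / 2)\<^sup>2 + (1 - s\<^sup>2 / 4) = 0"
      using re by (simp add: power2_eq_square algebra_simps)
    then show False using \<open>s\<^sup>2 < 4\<close> zero_le_power2[of "Re e - s / 2"] by linarith
  qed
  then show re': "Re e = s / 2" using im by (simp add: field_simps)
  have "(cmod e)\<^sup>2 = 2 * (Re e)\<^sup>2 - s * Re e + 1" unfolding cmod_power2 using re by simp
  also have "\<dots> = 1" unfolding re' by (simp add: power2_eq_square)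
  finally have "(cmod e)\<^sup>2 = 1\<^sup>2" by simp
  then show "cmod e = 1" using power2_eq_iff_nonneg norm_ge_zero zero_le_one by blast
qed

lemma norm_small_combination_less_one:
  assumes e: "cmod e = 1" "\<bar>Re e\<bar> \<le> 1/2" and st: "\<bar>s\<bar> \<le> 1/2" "\<bar>t\<bar> \<le> 1/2"
  shows "cmod (of_real s + of_real t * e) < 1"
proof -
  have "(cmod (of_real s + of_real t * e))\<^sup>2 = s\<^sup>2 + 2 * s * t * Re e + t\<^sup>2 * ((Re e)\<^sup>2 + (Im e)\<^sup>2)"
    unfolding cmod_power2 by (simp add: power2_eq_square algebra_simps)
  also have "(Re e)\<^sup>2 + (Im e)\<^sup>2 = 1" using e(1) by (simp flip: cmod_power2)
  finally have "(cmod (of_real s + of_real t * e))\<^sup>2 = s\<^sup>2 + t\<^sup>2 + 2 * s * t * Re e" by simp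
  moreover have "\<bar>2 * s * t * Re e\<bar> \<le> 2 * (1/2) * (1/2) * (1/2)"
    unfolding abs_mult using st e(2) by (intro mult_mono) auto
  moreover have "s\<^sup>2 \<le> (1/2)\<^sup>2" "t\<^sup>2 \<le> (1/2)\<^sup>2"
    using power_mono[OF st(1), of 2] power_mono[OF st(2), of 2] by simp_all
  ultimately have "(cmod (of_real s + of_real t * e))\<^sup>2 < 1\<^sup>2"
    by (simp add: power_divide)
  then show ?thesis by (rule power_less_imp_less_base) simp
qed

section \<open>Lattices and their units\<close>

lemma lattice_memI: "z = of_int m * p + of_int n * q \<Longrightarrow> z \<in> lattice p q"
  unfolding lattice_def by blast

lemma lattice_memE:
  assumes "z \<in> lattice p q"
  obtains m n where "z = of_int m * p + of_int n * q"
  using assms unfolding lattice_def by blast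

lemma zero_in_lattice: "0 \<in> lattice p q"
  by (rule lattice_memI[of _ 0 _ 0]) simp

lemma periods_in_lattice: "p \<in> lattice p q" "q \<in> lattice p q"
  by (auto intro: lattice_memI[of _ 1 _ 0] lattice_memI[of _ 0 _ 1])

lemma lattice_diff:
  assumes "x \<in> lattice p q" "y \<in> lattice p q"
  shows "x - y \<in> lattice p q"
proof -
  obtain m n m' n' where "x = of_int m * p + of_int n * q" "y = of_int m' * p + of_int n' * q"
    using assms by (elim lattice_memE)
  then show ?thesis by (intro lattice_memI[of _ "m - m'" _ "n - n'"]) (simp add: algebra_simps)
qed

lemma lattice_uminus: "x \<in> lattice p q \<Longrightarrow> - x \<in> lattice p q"
  using lattice_diff[OF zero_in_lattice] by fastforce

lemma lattice_add: "x \<in> lattice p q \<Longrightarrow> y \<in> lattice p q \<Longrightarrow> x + y \<in> lattice p q"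
  using lattice_diff[of x p q "- y"] lattice_uminus by fastforce

lemma lattice_of_int_mult: "x \<in> lattice p q \<Longrightarrow> of_int k * x \<in> lattice p q"
  by (rule of_int_mult_closed) (auto intro: zero_in_lattice lattice_diff)

lemma lattice_subset:
  assumes "a \<in> lattice p q" "b \<in> lattice p q"
  shows "lattice a b \<subseteq> lattice p q"
  using assms by (auto elim: lattice_memE[of _ a b] intro: lattice_add lattice_of_int_mult)

lemma half_lattice_eq: "{z. 2 * z \<in> lattice p q} = lattice (p / 2) (q / 2)"
  unfolding lattice_def by (auto simp: field_simps)

lemma coset_eq_iff: "coset (lattice p q) z = coset (lattice p q) w \<longleftrightarrow> z - w \<in> lattice p q"
proof
  assume "coset (lattice p q) z = coset (lattice p q) w"
  moreover have "z \<in> coset (lattice p q) z"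
    unfolding coset_def using zero_in_lattice by force
  ultimately show "z - w \<in> lattice p q" unfolding coset_def by auto
next
  assume zw: "z - w \<in> lattice p q"
  have "coset (lattice p q) z \<subseteq> coset (lattice p q) w" if "z - w \<in> lattice p q" for z w
  proof
    fix x assume "x \<in> coset (lattice p q) z"
    then obtain l where "l \<in> lattice p q" "x = w + ((z - w) + l)"
      unfolding coset_def by auto
    then show "x \<in> coset (lattice p q) w"
      unfolding coset_def using that lattice_add by blast
  qed
  moreover have "w - z \<in> lattice p q" using lattice_uminus[OF zw] by simp
  ultimately show "coset (lattice p q) z = coset (lattice p q) w" using zw by blast
qed

lemma periods_indep_iff_det: "periods_indep p q \<longleftrightarrow> Re p * Im q - Im p * Re q \<noteq> 0"
proof -
  have "Im (q / p) = (Re p * Im q - Im p * Re q) / ((Re p)\<^sup>2 + (Im p)\<^sup>2)"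
    by (simp add: Im_divide algebra_simps)
  moreover have "p = 0 \<longleftrightarrow> (Re p)\<^sup>2 + (Im p)\<^sup>2 = 0"
    by (simp add: complex_eq_iff sum_power2_eq_zero_iff)
  ultimately show ?thesis unfolding periods_indep_def by force
qed

lemma periods_indep_mult: "a \<noteq> 0 \<Longrightarrow> Im e \<noteq> 0 \<Longrightarrow> periods_indep a (a * e)"
  unfolding periods_indep_def by simp

lemma lattice_unit_nonzero:
  assumes "lattice_unit L e"
  shows "e \<noteq> 0"
proof
  assume "e = 0"
  obtain n where "n > 0" "e ^ n = 1" using assms unfolding lattice_unit_def by blast
  then show False using \<open>e = 0\<close> by (simp add: power_0_left)
qed

lemma lattice_unit_mult_mem: "lattice_unit L e \<Longrightarrow> x \<in> L \<Longrightarrow> e * x \<in> L"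
  unfolding lattice_unit_def by blast

lemma lattice_unit_one: "lattice_unit L 1"
  unfolding lattice_unit_def by auto

lemma lattice_unit_mult:
  assumes "lattice_unit L e" "lattice_unit L e'"
  shows "lattice_unit L (e * e')"
proof -
  obtain n n' where n: "n > 0" "e ^ n = 1" "n' > 0" "e' ^ n' = 1"
    and im: "(\<lambda>z. e * z) ` L = L" "(\<lambda>z. e' * z) ` L = L"
    using assms unfolding lattice_unit_def by blast
  have "(e * e') ^ (n * n') = (e ^ n) ^ n' * (e' ^ n') ^ n"
    by (simp add: power_mult_distrib mult.commute[of n] flip: power_mult)
  then have "(e * e') ^ (n * n') = 1" using n by simp
  moreover have "(\<lambda>z. e * e' * z) ` L = (\<lambda>z. e * z) ` ((\<lambda>z. e' * z) ` L)"
    by (simp add: image_image mult.assoc)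
  ultimately show ?thesis
    unfolding lattice_unit_def using n(1,3) im by (intro conjI exI[of _ "n * n'"]) simp_all
qed

lemma lattice_unit_power: "lattice_unit L e \<Longrightarrow> lattice_unit L (e ^ k)"
  by (induction k) (simp_all add: lattice_unit_one lattice_unit_mult)

lemma lattice_unit_inverse:
  assumes "lattice_unit L e"
  shows "lattice_unit L (inverse e)"
proof -
  have e: "e \<noteq> 0" using lattice_unit_nonzero[OF assms] .
  obtain n where "n > 0" "e ^ n = 1" using assms unfolding lattice_unit_def by auto
  then have "inverse e ^ n = 1" by (simp add: power_inverse)
  moreover have "(\<lambda>z. inverse e * z) ` L = L"
  proof -
    have "(\<lambda>z. inverse e * z) ` ((\<lambda>z. e * z) ` L) = L"
      using e by (simp add: image_image mult.assoc[symmetric])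
    then show ?thesis using assms unfolding lattice_unit_def by simp
  qed
  ultimately show ?thesis unfolding lattice_unit_def using \<open>n > 0\<close> by blast
qed

section \<open>Affine automorphisms of the torus\<close>

lemma coset_in_torus: "coset L z \<in> torus L"
  unfolding torus_def by simp

lemma torusE:
  assumes "P \<in> torus L"
  obtains z where "P = coset L z"
  using assms unfolding torus_def by auto

lemma aff_coset:
  assumes "lattice_unit L e"
  shows "aff L e b (coset L z) = coset L (e * z + b)"
proof -
  have "aff L e b (coset L z) = (\<lambda>l. e * z + b + l) ` ((\<lambda>l. e * l) ` L)"
    unfolding aff_def coset_def torus_def by (simp add: image_image algebra_simps)
  then show ?thesis using assms unfolding lattice_unit_def coset_def by simp
qed

lemma aff_outside_torus: "P \<notin> torus L \<Longrightarrow> aff L e b P = undefined"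
  unfolding aff_def by simp

lemma aff_in_torus: "lattice_unit L e \<Longrightarrow> P \<in> torus L \<Longrightarrow> aff L e b P \<in> torus L"
  by (auto elim!: torusE simp: aff_coset coset_in_torus)

lemma compT_aff:
  assumes "lattice_unit L e" "lattice_unit L e'"
  shows "compT L (aff L e b) (aff L e' b') = aff L (e * e') (e * b' + b)"
proof
  fix P
  show "compT L (aff L e b) (aff L e' b') P = aff L (e * e') (e * b' + b) P"
  proof (cases "P \<in> torus L")
    case True
    then obtain z where "P = coset L z" by (rule torusE)
    then show ?thesis using assms lattice_unit_mult[OF assms] True
      by (simp add: compT_def compose_def aff_coset algebra_simps)
  qed (simp add: compT_def compose_def aff_outside_torus)
qed

lemma idT_apply: "P \<in> torus L \<Longrightarrow> idT L P = P"
  by (auto elim!: torusE simp: idT_def aff_coset lattice_unit_one)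

lemma invT_aff:
  assumes e: "lattice_unit L e"
  shows "invT L (aff L e b) = aff L (inverse e) (- b / e)"
proof
  fix P
  let ?g = "aff L (inverse e) (- b / e)"
  have e': "lattice_unit L (inverse e)" and e0: "e \<noteq> 0"
    using lattice_unit_inverse lattice_unit_nonzero e by blast+
  have left: "?g (aff L e b P) = P" and right: "aff L e b (?g P) = P" if "P \<in> torus L" for P
    using that e e' e0 by (auto elim!: torusE simp: aff_coset field_simps)
  show "invT L (aff L e b) P = ?g P"
  proof (cases "P \<in> torus L")
    case True
    have "inj_on (aff L e b) (torus L)" using left by (rule inj_on_inverseI)
    then have "inv_into (torus L) (aff L e b) P = ?g P"
      using True e' right by (intro inv_into_f_eq aff_in_torus)
    then show ?thesis unfolding invT_def using True by simp
  qed (simp add: invT_def aff_outside_torus)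
qed

lemma invT_apply:
  assumes "\<gamma> \<in> Aut L" "Q \<in> torus L"
  shows "invT L \<gamma> (\<gamma> Q) = Q"
proof -
  obtain e b z where e: "\<gamma> = aff L e b" "lattice_unit L e" and z: "Q = coset L z"
    using assms unfolding Aut_def by (auto elim: torusE)
  have "inverse e * (e * z + b) + - b / e = z"
    using lattice_unit_nonzero[OF e(2)] by (simp add: field_simps)
  then show ?thesis
    unfolding e z invT_aff[OF e(2)] aff_coset[OF e(2)] aff_coset[OF lattice_unit_inverse[OF e(2)]]
    by simp
qed

lemma orbit_apply:
  assumes \<Gamma>: "aut_subgroup L \<Gamma>" and "\<gamma> \<in> \<Gamma>" "Q \<in> torus L"
  shows "orbit \<Gamma> (\<gamma> Q) = orbit \<Gamma> Q"
proof -
  have comp: "compT L \<delta> \<gamma> \<in> \<Gamma>" "compT L \<delta> (invT L \<gamma>) \<in> \<Gamma>" if "\<delta> \<in> \<Gamma>" for \<delta>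
    using \<Gamma> that assms(2) unfolding aut_subgroup_def by blast+
  have "\<gamma> \<in> Aut L" using assms unfolding aut_subgroup_def by blast
  then have \<gamma>Q: "\<gamma> Q \<in> torus L" and inv: "invT L \<gamma> (\<gamma> Q) = Q"
    using assms(3) invT_apply unfolding Aut_def by (blast intro: aff_in_torus)+
  show ?thesis unfolding orbit_def
  proof (intro equalityI image_subsetI)
    fix \<delta> assume "\<delta> \<in> \<Gamma>"
    have "\<delta> (\<gamma> Q) = compT L \<delta> \<gamma> Q"
      unfolding compT_def compose_def using assms(3) by simp
    then show "\<delta> (\<gamma> Q) \<in> (\<lambda>\<gamma>. \<gamma> Q) ` \<Gamma>" using comp(1)[OF \<open>\<delta> \<in> \<Gamma>\<close>] by (rule image_eqI)
    have "\<delta> Q = compT L \<delta> (invT L \<gamma>) (\<gamma> Q)"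
      unfolding compT_def compose_def using \<gamma>Q inv by simp
    then show "\<delta> Q \<in> (\<lambda>\<delta>. \<delta> (\<gamma> Q)) ` \<Gamma>" using comp(2)[OF \<open>\<delta> \<in> \<Gamma>\<close>] by (rule image_eqI)
  qed
qed

lemma generated_subset: "aut_subgroup L H \<Longrightarrow> S \<subseteq> H \<Longrightarrow> generated L S \<subseteq> H"
  unfolding generated_def by blast

lemma subset_generated: "S \<subseteq> generated L S"
  unfolding generated_def by blast

lemma semidirD:
  assumes "semidir L \<Gamma> G K"
  shows "G \<subseteq> Aut0 L" "K \<subseteq> transl L" "\<Gamma> = generated L (G \<union> K)" "G \<subseteq> \<Gamma>" "K \<subseteq> \<Gamma>"
  using assms subset_generated[of "G \<union> K" L] unfolding semidir_def by blast+

lemma aff_power: "lattice_unit L e \<Longrightarrow> (compT L (aff L e 0) ^^ k) (idT L) = aff L (e ^ k) 0"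
  by (induction k) (simp_all add: idT_def compT_aff lattice_unit_power)

lemma transl_power: "(compT L (aff L 1 b) ^^ k) (idT L) = aff L 1 (of_nat k * b)"
  by (induction k) (simp_all add: idT_def compT_aff lattice_unit_one algebra_simps)

lemma mem_cyc: "g \<in> Aut L \<Longrightarrow> g \<in> cyc L g"
  unfolding Aut_def cyc_def
  by (auto simp: idT_def compT_aff lattice_unit_one intro!: exI[of _ 1])

locale torus_lattice =
  fixes p q :: complex
  assumes periods_indep: "periods_indep p q"
begin

abbreviation L where "L \<equiv> lattice p q"

lemma det_nonzero: "Re p * Im q - Im p * Re q \<noteq> 0"
  using periods_indep periods_indep_iff_det by blast

lemma real_combination_eq_zero:
  assumes "of_real x * p + of_real y * q = 0"
  shows "x = 0" "y = 0"
proof -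
  have "Im (cnj q * (of_real x * p + of_real y * q)) = - x * (Re p * Im q - Im p * Re q)"
    and "Im (cnj p * (of_real x * p + of_real y * q)) = y * (Re p * Im q - Im p * Re q)"
    by (simp_all add: algebra_simps)
  then show "x = 0" "y = 0" using assms det_nonzero by (simp_all only: Im_complex_of_real) auto
qed

lemma int_combination_eq_zero:
  assumes "of_int m * p + of_int n * q = 0"
  shows "m = 0" "n = 0"
  using real_combination_eq_zero[of "of_int m" "of_int n"] assms by simp_all

text \<open>Every point of \<open>L/d\<close> is some \<open>frac_pt d m n\<close>, and membership in \<open>L\<close> becomes
  divisibility of \<open>m\<close> and \<open>n\<close> by \<open>d\<close>.\<close>

definition frac_pt :: "int \<Rightarrow> int \<Rightarrow> int \<Rightarrow> complex" where
  "frac_pt d m n = (of_int m * p + of_int n * q) / of_int d"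

lemma frac_pt_diff: "frac_pt d m n - frac_pt d m' n' = frac_pt d (m - m') (n - n')"
  by (simp add: frac_pt_def diff_divide_distrib algebra_simps)

lemma frac_pt_add: "frac_pt d m n + frac_pt d m' n' = frac_pt d (m + m') (n + n')"
  by (simp add: frac_pt_def add_divide_distrib algebra_simps)

lemma of_int_mult_frac_pt: "of_int k * frac_pt d m n = frac_pt d (k * m) (k * n)"
  by (simp add: frac_pt_def algebra_simps)

lemma numeral_mult_frac_pt: "numeral k * frac_pt d m n = frac_pt d (numeral k * m) (numeral k * n)"
  using of_int_mult_frac_pt[of "numeral k"] by simp

lemma frac_pt_scale: "k \<noteq> 0 \<Longrightarrow> frac_pt (k * d) (k * m) (k * n) = frac_pt d m n"
  unfolding frac_pt_def by (simp add: mult.assoc flip: distrib_left)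

lemma frac_pt_inject: "d \<noteq> 0 \<Longrightarrow> frac_pt d m n = frac_pt d m' n' \<longleftrightarrow> m = m' \<and> n = n'"
  using int_combination_eq_zero[of "m - m'" "n - n'"]
  by (auto simp: frac_pt_def divide_cancel_right algebra_simps)

lemma frac_pt_in_lattice_iff:
  assumes "d \<noteq> 0"
  shows "frac_pt d m n \<in> L \<longleftrightarrow> d dvd m \<and> d dvd n"
proof
  assume "frac_pt d m n \<in> L"
  then obtain m' n' where "frac_pt d m n = of_int m' * p + of_int n' * q"
    by (rule lattice_memE)
  then have "of_int (m - d * m') * p + of_int (n - d * n') * q = 0"
    using assms by (simp add: frac_pt_def field_simps)
  then show "d dvd m \<and> d dvd n"
    using int_combination_eq_zero by (metis dvd_triv_left eq_iff_diff_eq_0)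
next
  assume "d dvd m \<and> d dvd n"
  then obtain m' n' where "m = d * m'" "n = d * n'" by blast
  then show "frac_pt d m n \<in> L"
    using assms by (intro lattice_memI[of _ m' _ n']) (simp add: frac_pt_def field_simps)
qed

lemma frac_ptE:
  assumes "d \<noteq> 0" "of_int d * z \<in> L"
  obtains m n where "z = frac_pt d m n"
proof -
  obtain m n where "of_int d * z = of_int m * p + of_int n * q"
    using assms(2) by (rule lattice_memE)
  then have "z = frac_pt d m n" using assms(1) by (simp add: frac_pt_def field_simps)
  then show thesis by (rule that)
qed

lemma half_lattice_cases:
  assumes "2 * z \<in> L"
  obtains "z \<in> L" | "z - frac_pt 2 1 0 \<in> L" | "z - frac_pt 2 0 1 \<in> L" | "z - frac_pt 2 1 1 \<in> L"
proof -
  obtain m n where z: "z = frac_pt 2 m n" using frac_ptE[of 2 z] assms by auto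
  have "frac_pt 2 0 0 = 0" by (simp add: frac_pt_def)
  then have "z = z - frac_pt 2 0 0" by simp
  moreover have "(2 dvd m \<and> 2 dvd n) \<or> (2 dvd m - 1 \<and> 2 dvd n) \<or> (2 dvd m \<and> 2 dvd n - 1)
      \<or> (2 dvd m - 1 \<and> 2 dvd n - 1)" by presburger
  ultimately show thesis using that unfolding z by (auto simp: frac_pt_diff frac_pt_in_lattice_iff)
qed

lemma half_period_not_in_lattice: "frac_pt 2 1 0 \<notin> L"
  by (simp add: frac_pt_in_lattice_iff)

lemma periods_indep_frac_pt:
  assumes "d \<noteq> 0" "m \<noteq> 0" "n' \<noteq> 0"
  shows "periods_indep (frac_pt d m n) (frac_pt d 0 n')"
proof -
  have "Re (frac_pt d m n) * Im (frac_pt d 0 n') - Im (frac_pt d m n) * Re (frac_pt d 0 n')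
      = of_int (m * n') / of_int d ^ 2 * (Re p * Im q - Im p * Re q)"
    unfolding frac_pt_def using assms(1) by (simp add: power2_eq_square field_simps)
  then show ?thesis using det_nonzero assms by (simp add: periods_indep_iff_det)
qed

lemma finite_lattice_ball: "finite {l \<in> L. cmod l \<le> R}"
proof -
  define D where "D = \<bar>Re p * Im q - Im p * Re q\<bar>"
  define N where "N = \<lceil>(cmod p + cmod q) * R / D\<rceil>"
  have D: "D > 0" using det_nonzero unfolding D_def by simp
  have "{l \<in> L. cmod l \<le> R} \<subseteq> (\<lambda>(m, n). of_int m * p + of_int n * q) ` ({-N..N} \<times> {-N..N})"
  proof
    fix l assume l: "l \<in> {l \<in> L. cmod l \<le> R}"
    then obtain m n where mn: "l = of_int m * p + of_int n * q" by (auto elim: lattice_memE)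
    have R: "R \<ge> 0" using l norm_ge_zero order_trans by blast
    have bound: "\<bar>Im (cnj w * l)\<bar> \<le> (cmod p + cmod q) * R" if "w = p \<or> w = q" for w
    proof -
      have "\<bar>Im (cnj w * l)\<bar> \<le> cmod w * cmod l"
        using abs_Im_le_cmod[of "cnj w * l"] by (simp add: norm_mult)
      also have "\<dots> \<le> cmod w * R" using l by (simp add: mult_left_mono)
      also have "\<dots> \<le> (cmod p + cmod q) * R" using that R by (auto intro: mult_right_mono)
      finally show ?thesis .
    qed
    have "Im (cnj p * l) = of_int n * (Re p * Im q - Im p * Re q)"
      "Im (cnj q * l) = - of_int m * (Re p * Im q - Im p * Re q)"
      unfolding mn by (simp_all add: algebra_simps)
    then have "of_int \<bar>k\<bar> \<le> (cmod p + cmod q) * R / D" if "k = m \<or> k = n" for k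
      using bound[of p] bound[of q] that D unfolding D_def by (auto simp: le_divide_eq abs_mult)
    then have "of_int \<bar>k\<bar> \<le> (of_int N :: real)" if "k = m \<or> k = n" for k
      unfolding N_def using that le_of_int_ceiling order_trans by blast
    then have "\<bar>m\<bar> \<le> N" "\<bar>n\<bar> \<le> N" using of_int_le_iff by blast+
    then show "l \<in> (\<lambda>(m, n). of_int m * p + of_int n * q) ` ({-N..N} \<times> {-N..N})"
      using mn by force
  qed
  then show ?thesis by (rule finite_subset) auto
qed

lemma shortest_lattice_vector:
  obtains a where "a \<in> L" "a \<noteq> 0" "\<And>l. l \<in> L \<Longrightarrow> l \<noteq> 0 \<Longrightarrow> cmod a \<le> cmod l"
proof -
  define S where "S = {l \<in> L. cmod l \<le> cmod p} - {0}"
  have "finite S" unfolding S_def using finite_lattice_ball by auto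
  moreover have "p \<in> S"
    unfolding S_def using periods_in_lattice periods_indep by (auto simp: periods_indep_def)
  ultimately obtain a where a: "a \<in> S" "\<And>l. l \<in> S \<Longrightarrow> cmod a \<le> cmod l"
    using arg_min_if_finite[of S cmod] by (metis empty_iff not_le)
  have "cmod a \<le> cmod l" if "l \<in> L" "l \<noteq> 0" for l
    using a \<open>p \<in> S\<close> that unfolding S_def by (cases "cmod l \<le> cmod p") force+
  then show thesis using a(1) that unfolding S_def by blast
qed

lemma lattice_unit_basis:
  assumes e: "lattice_unit L e" "Im e \<noteq> 0" "cmod e = 1" "\<bar>Re e\<bar> \<le> 1/2"
  obtains a where "periods_indep a (a * e)" "lattice a (a * e) = L"
proof -
  obtain a where a: "a \<in> L" "a \<noteq> 0" "\<And>l. l \<in> L \<Longrightarrow> l \<noteq> 0 \<Longrightarrow> cmod a \<le> cmod l"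
    using shortest_lattice_vector by blast
  have ae: "a * e \<in> L" using lattice_unit_mult_mem[OF e(1) a(1)] by (simp add: mult.commute)
  have "l \<in> lattice a (a * e)" if l: "l \<in> L" for l
  proof -
    define y where "y = Im (l / a) / Im e"
    define x where "x = Re (l / a) - y * Re e"
    have "l / a = of_real x + of_real y * e"
      unfolding x_def y_def using e(2) by (intro complex_eqI) (auto simp: field_simps)
    then have l_eq: "l = (of_real x + of_real y * e) * a" using a(2) by (simp add: field_simps)
    define r where "r = l - (of_int (round x) * a + of_int (round y) * (a * e))"
    have "r = (of_real (x - of_int (round x)) + of_real (y - of_int (round y)) * e) * a"
      unfolding r_def l_eq by (simp add: algebra_simps)
    moreover have "cmod (of_real (x - of_int (round x)) + of_real (y - of_int (round y)) * e) < 1"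
      using norm_small_combination_less_one[OF e(3,4)] of_int_round_abs_le[of x]
        of_int_round_abs_le[of y] by (metis abs_minus_commute)
    ultimately have "cmod r < cmod a" using a(2) by (simp add: norm_mult)
    moreover have "r \<in> L"
      unfolding r_def using l a(1) ae by (intro lattice_diff lattice_add lattice_of_int_mult)
    ultimately have "r = 0" using a(3) by force
    then show ?thesis unfolding r_def by (intro lattice_memI) simp
  qed
  moreover have "lattice a (a * e) \<subseteq> L" using a(1) ae by (rule lattice_subset)
  ultimately have "lattice a (a * e) = L" by blast
  then show thesis using that periods_indep_mult[OF a(2) e(2)] by blast
qed

lemma aff_eq_iff:
  assumes "lattice_unit L e" "lattice_unit L e'"
  shows "aff L e b = aff L e' b' \<longleftrightarrow> e = e' \<and> b - b' \<in> L"
proof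
  assume h: "aff L e b = aff L e' b'"
  have shift: "(e - e') * z + (b - b') \<in> L" for z
    using arg_cong[OF h, of "\<lambda>f. f (coset L z)"] assms
    by (simp add: aff_coset coset_eq_iff algebra_simps)
  from shift[of 0] have "b - b' \<in> L" by simp
  moreover have "e = e'"
  proof (rule ccontr)
    assume "e \<noteq> e'"
    have "(e - e') * z \<in> L" for z using lattice_diff[OF shift \<open>b - b' \<in> L\<close>] by simp
    moreover have "(e - e') * (frac_pt 2 1 0 / (e - e')) = frac_pt 2 1 0" using \<open>e \<noteq> e'\<close> by simp
    ultimately show False using half_period_not_in_lattice by metis
  qed
  ultimately show "e = e' \<and> b - b' \<in> L" by simp
next
  assume eq: "e = e' \<and> b - b' \<in> L"
  have "aff L e b P = aff L e' b' P" for P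
  proof (cases "P \<in> torus L")
    case True
    then obtain z where "P = coset L z" by (rule torusE)
    then show ?thesis using assms eq by (simp add: aff_coset coset_eq_iff)
  qed (simp add: aff_outside_torus)
  then show "aff L e b = aff L e' b'" by blast
qed

end

section \<open>Groups of affine automorphisms with given rotations and translations\<close>

definition aff_group :: "complex set \<Rightarrow> complex set \<Rightarrow> complex set \<Rightarrow> (complex set \<Rightarrow> complex set) set"
  where "aff_group L U B = {aff L u b | u b. u \<in> U \<and> b \<in> B}"

definition branch_lifts :: "complex set \<Rightarrow> complex set \<Rightarrow> complex set" where
  "branch_lifts U B = {z. z \<notin> B \<and> (\<exists>u\<in>U. u \<noteq> 1 \<and> (1 - u) * z \<in> B)}"

definition orbit_representatives :: "complex set \<Rightarrow> complex set \<Rightarrow> complex set \<Rightarrow> bool" where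
  "orbit_representatives U B R \<longleftrightarrow> R \<subseteq> branch_lifts U B
     \<and> (\<forall>z\<in>branch_lifts U B. \<exists>r\<in>R. \<exists>u\<in>U. z - u * r \<in> B)
     \<and> (\<forall>r\<in>R. \<forall>r'\<in>R. \<forall>u\<in>U. r - u * r' \<in> B \<longrightarrow> r = r')"

locale affine_group_data = torus_lattice +
  fixes U B :: "complex set"
  assumes unit: "u \<in> U \<Longrightarrow> lattice_unit L u"
    and one_mem: "1 \<in> U"
    and mult_mem: "u \<in> U \<Longrightarrow> v \<in> U \<Longrightarrow> u * v \<in> U"
    and inverse_mem: "u \<in> U \<Longrightarrow> inverse u \<in> U"
    and lattice_le: "L \<subseteq> B"
    and add_mem: "x \<in> B \<Longrightarrow> y \<in> B \<Longrightarrow> x + y \<in> B"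
    and uminus_mem: "x \<in> B \<Longrightarrow> - x \<in> B"
    and unit_mult_mem: "u \<in> U \<Longrightarrow> x \<in> B \<Longrightarrow> u * x \<in> B"
begin

lemma diff_mem: "x \<in> B \<Longrightarrow> y \<in> B \<Longrightarrow> x - y \<in> B"
  using add_mem uminus_mem by (metis diff_conv_add_uminus)

lemma aut_subgroup_aff_group: "aut_subgroup L (aff_group L U B)"
  unfolding aut_subgroup_def
proof (intro conjI ballI)
  show "aff_group L U B \<subseteq> Aut L" unfolding aff_group_def Aut_def using unit by blast
  show "idT L \<in> aff_group L U B"
    unfolding idT_def aff_group_def using one_mem lattice_le zero_in_lattice by blast
next
  fix f g assume "f \<in> aff_group L U B" "g \<in> aff_group L U B"
  then obtain u b v c where "f = aff L u b" "g = aff L v c" "u \<in> U" "v \<in> U" "b \<in> B" "c \<in> B"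
    unfolding aff_group_def by blast
  moreover have "compT L (aff L u b) (aff L v c) = aff L (u * v) (u * c + b)"
    using calculation unit by (simp add: compT_aff)
  ultimately show "compT L f g \<in> aff_group L U B"
    unfolding aff_group_def using mult_mem add_mem unit_mult_mem by blast
next
  fix f assume "f \<in> aff_group L U B"
  then obtain u b where "f = aff L u b" "u \<in> U" "b \<in> B" unfolding aff_group_def by blast
  moreover have "invT L (aff L u b) = aff L (inverse u) (inverse u * - b)"
    using calculation unit by (simp add: invT_aff field_simps)
  ultimately show "invT L f \<in> aff_group L U B"
    unfolding aff_group_def using inverse_mem uminus_mem unit_mult_mem by blast
qed

lemma orbit_aff_group_eq_iff:
  "orbit (aff_group L U B) (coset L z) = orbit (aff_group L U B) (coset L w)
    \<longleftrightarrow> (\<exists>u\<in>U. z - u * w \<in> B)"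
proof
  assume orb: "orbit (aff_group L U B) (coset L z) = orbit (aff_group L U B) (coset L w)"
  have "idT L \<in> aff_group L U B" using aut_subgroup_aff_group unfolding aut_subgroup_def by blast
  then have "coset L z \<in> orbit (aff_group L U B) (coset L z)"
    unfolding orbit_def by (rule rev_image_eqI) (simp add: idT_apply coset_in_torus)
  then have "coset L z \<in> orbit (aff_group L U B) (coset L w)" unfolding orb .
  then obtain u b where "u \<in> U" "b \<in> B" "coset L z = aff L u b (coset L w)"
    unfolding orbit_def aff_group_def by blast
  moreover from this have "z - (u * w + b) \<in> B"
    using unit lattice_le by (auto simp: aff_coset coset_eq_iff)
  ultimately show "\<exists>u\<in>U. z - u * w \<in> B"
    using add_mem[of "z - (u * w + b)" b] by (auto simp: algebra_simps)
next
  assume "\<exists>u\<in>U. z - u * w \<in> B"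
  then obtain u where "u \<in> U" "z - u * w \<in> B" by blast
  then have "aff L u (z - u * w) \<in> aff_group L U B" "aff L u (z - u * w) (coset L w) = coset L z"
    unfolding aff_group_def using unit by (auto simp: aff_coset)
  then show "orbit (aff_group L U B) (coset L z) = orbit (aff_group L U B) (coset L w)"
    using orbit_apply[OF aut_subgroup_aff_group _ coset_in_torus] by metis
qed

lemma coset_in_punctured_iff: "coset L z \<in> punctured L (aff_group L U B) \<longleftrightarrow> z \<notin> B"
proof -
  have "coset L z \<in> orbit (aff_group L U B) (coset L 0) \<longleftrightarrow> z \<in> B"
  proof
    assume "coset L z \<in> orbit (aff_group L U B) (coset L 0)"
    then obtain u b where "u \<in> U" "b \<in> B" "coset L z = coset L b"
      unfolding orbit_def aff_group_def using unit by (auto simp: aff_coset)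
    then show "z \<in> B" using lattice_le add_mem coset_eq_iff by (metis diff_add_cancel subsetD)
  next
    assume "z \<in> B"
    then have "aff L 1 z \<in> aff_group L U B" "coset L z = aff L 1 z (coset L 0)"
      unfolding aff_group_def using one_mem by (auto simp: aff_coset lattice_unit_one)
    then show "coset L z \<in> orbit (aff_group L U B) (coset L 0)" unfolding orbit_def by blast
  qed
  then show ?thesis unfolding punctured_def using coset_in_torus by blast
qed

lemma nontrivial_stabilizer_iff:
  "(\<exists>\<gamma>\<in>aff_group L U B. \<gamma> \<noteq> idT L \<and> \<gamma> (coset L z) = coset L z) \<longleftrightarrow> (\<exists>u\<in>U. u \<noteq> 1 \<and> (1 - u) * z \<in> B)"
proof
  assume "\<exists>\<gamma>\<in>aff_group L U B. \<gamma> \<noteq> idT L \<and> \<gamma> (coset L z) = coset L z"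
  then obtain u b where ub: "u \<in> U" "b \<in> B" "aff L u b \<noteq> idT L" "u * z + b - z \<in> L"
    unfolding aff_group_def using unit by (auto simp: aff_coset coset_eq_iff)
  have "u \<noteq> 1"
    using ub unit unfolding idT_def by (auto simp: aff_eq_iff lattice_unit_one)
  moreover have "(1 - u) * z = b - (u * z + b - z)" by (simp add: algebra_simps)
  ultimately show "\<exists>u\<in>U. u \<noteq> 1 \<and> (1 - u) * z \<in> B"
    using ub lattice_le diff_mem by (metis subsetD)
next
  assume "\<exists>u\<in>U. u \<noteq> 1 \<and> (1 - u) * z \<in> B"
  then obtain u where "u \<in> U" "u \<noteq> 1" "(1 - u) * z \<in> B" by blast
  then show "\<exists>\<gamma>\<in>aff_group L U B. \<gamma> \<noteq> idT L \<and> \<gamma> (coset L z) = coset L z"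
    using unit unfolding aff_group_def idT_def
    by (intro bexI[of _ "aff L u ((1 - u) * z)"])
      (auto simp: aff_eq_iff aff_coset lattice_unit_one algebra_simps)
qed

lemma branch_points_aff_group:
  "branch_points L (aff_group L U B) = (\<lambda>z. orbit (aff_group L U B) (coset L z)) ` branch_lifts U B"
proof -
  have "branch_points L (aff_group L U B) = (\<lambda>z. orbit (aff_group L U B) (coset L z)) `
      {z. coset L z \<in> punctured L (aff_group L U B)
        \<and> (\<exists>\<gamma>\<in>aff_group L U B. \<gamma> \<noteq> idT L \<and> \<gamma> (coset L z) = coset L z)}"
    unfolding branch_points_def punctured_def torus_def by blast
  then show ?thesis
    by (simp only: coset_in_punctured_iff nontrivial_stabilizer_iff branch_lifts_def)
qed

theorem card_branch_points_aff_group: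
  assumes "orbit_representatives U B R"
  shows "card (branch_points L (aff_group L U B)) = card R"
proof -
  have "branch_points L (aff_group L U B) = (\<lambda>z. orbit (aff_group L U B) (coset L z)) ` R"
    using assms unfolding branch_points_aff_group orbit_representatives_def
    by (auto simp: image_iff orbit_aff_group_eq_iff)
  moreover have "inj_on (\<lambda>z. orbit (aff_group L U B) (coset L z)) R"
    using assms unfolding orbit_representatives_def
    by (auto intro!: inj_onI simp: orbit_aff_group_eq_iff)
  ultimately show ?thesis by (simp add: card_image)
qed

end

definition translation_vectors :: "complex set \<Rightarrow> (complex set \<Rightarrow> complex set) set \<Rightarrow> complex set"
  where "translation_vectors L \<Gamma> = {b. aff L 1 b \<in> \<Gamma>}"

lemma (in affine_group_data) aff_group_eq_generated:
  assumes H: "aut_subgroup L H" "H = generated L S" and "S \<subseteq> aff_group L U B"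
    and rot: "\<And>u. u \<in> U \<Longrightarrow> aff L u 0 \<in> H" and transl: "B \<subseteq> translation_vectors L H"
  shows "H = aff_group L U B"
proof
  show "H \<subseteq> aff_group L U B"
    using generated_subset[OF aut_subgroup_aff_group assms(3)] H(2) by simp
  show "aff_group L U B \<subseteq> H"
  proof
    fix f assume "f \<in> aff_group L U B"
    then obtain u b where ub: "f = aff L u b" "u \<in> U" "b \<in> B" unfolding aff_group_def by blast
    then have "f = compT L (aff L 1 b) (aff L u 0)"
      using unit by (simp add: compT_aff lattice_unit_one)
    moreover have "aff L 1 b \<in> H" using transl ub(3) unfolding translation_vectors_def by blast
    ultimately show "f \<in> H" using rot[OF ub(2)] H(1) unfolding aut_subgroup_def by simp
  qed
qed

context torus_lattice
begin

lemma affine_group_data_powers: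
  assumes e: "lattice_unit L e" and B: "L \<subseteq> B" "\<And>x y. x \<in> B \<Longrightarrow> y \<in> B \<Longrightarrow> x + y \<in> B"
    "\<And>x. x \<in> B \<Longrightarrow> - x \<in> B" "\<And>x. x \<in> B \<Longrightarrow> e * x \<in> B"
  shows "affine_group_data p q (range (\<lambda>k. e ^ k)) B"
proof unfold_locales
  obtain n where n: "n > 0" "e ^ n = 1" using e unfolding lattice_unit_def by blast
  have "inverse (e ^ k) = e ^ (k * (n - 1))" for k
  proof -
    have "e ^ k * e ^ (k * (n - 1)) = (e ^ n) ^ k"
      using n(1) by (simp flip: power_add power_mult) (simp add: algebra_simps)
    then show ?thesis using n(2) by (simp add: inverse_unique)
  qed
  then show "inverse u \<in> range (\<lambda>k. e ^ k)" if "u \<in> range (\<lambda>k. e ^ k)" for u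
    using that by auto
  have "e ^ k * x \<in> B" if "x \<in> B" for k x
    using that B(4) by (induction k) (simp_all add: mult.assoc)
  then show "u * x \<in> B" if "u \<in> range (\<lambda>k. e ^ k)" "x \<in> B" for u x
    using that by blast
qed (use periods_indep e B in
    \<open>auto simp: lattice_unit_power simp flip: power_add intro: range_eqI[of _ _ 0]\<close>)

lemma affine_group_data_lattice:
  assumes "lattice_unit L e" "L \<subseteq> lattice b1 b2" "\<And>x. x \<in> lattice b1 b2 \<Longrightarrow> e * x \<in> lattice b1 b2"
  shows "affine_group_data p q (range (\<lambda>k. e ^ k)) (lattice b1 b2)"
  using assms by (intro affine_group_data_powers) (simp_all add: lattice_add lattice_uminus)

lemma translation_vectors_subgroup:
  assumes \<Gamma>: "aut_subgroup L \<Gamma>"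
  shows "L \<subseteq> translation_vectors L \<Gamma>"
    and "x \<in> translation_vectors L \<Gamma> \<Longrightarrow> y \<in> translation_vectors L \<Gamma>
      \<Longrightarrow> x + y \<in> translation_vectors L \<Gamma>"
    and "x \<in> translation_vectors L \<Gamma> \<Longrightarrow> - x \<in> translation_vectors L \<Gamma>"
    and "lattice_unit L u \<Longrightarrow> aff L u 0 \<in> \<Gamma> \<Longrightarrow> x \<in> translation_vectors L \<Gamma>
      \<Longrightarrow> u * x \<in> translation_vectors L \<Gamma>"
proof -
  have comp: "compT L f g \<in> \<Gamma>" if "f \<in> \<Gamma>" "g \<in> \<Gamma>" for f g
    using \<Gamma> that unfolding aut_subgroup_def by blast
  have inv: "invT L f \<in> \<Gamma>" if "f \<in> \<Gamma>" for f
    using \<Gamma> that unfolding aut_subgroup_def by blast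
  have "aff L 1 x = idT L" if "x \<in> L" for x
    using that by (simp add: idT_def aff_eq_iff lattice_unit_one)
  then show "L \<subseteq> translation_vectors L \<Gamma>"
    using \<Gamma> unfolding aut_subgroup_def translation_vectors_def by auto
  show "x \<in> translation_vectors L \<Gamma> \<Longrightarrow> y \<in> translation_vectors L \<Gamma> \<Longrightarrow> x + y \<in> translation_vectors L \<Gamma>"
    using comp unfolding translation_vectors_def
    by (fastforce simp: compT_aff lattice_unit_one add.commute)
  show "x \<in> translation_vectors L \<Gamma> \<Longrightarrow> - x \<in> translation_vectors L \<Gamma>"
    using inv unfolding translation_vectors_def by (fastforce simp: invT_aff lattice_unit_one)
  assume u: "lattice_unit L u" "aff L u 0 \<in> \<Gamma>" and "x \<in> translation_vectors L \<Gamma>"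
  then have "compT L (compT L (aff L u 0) (aff L 1 x)) (invT L (aff L u 0)) \<in> \<Gamma>"
    using comp inv unfolding translation_vectors_def by blast
  moreover have "compT L (compT L (aff L u 0) (aff L 1 x)) (invT L (aff L u 0)) = aff L 1 (u * x)"
    using u(1) lattice_unit_nonzero[OF u(1)]
    by (simp add: invT_aff compT_aff lattice_unit_one lattice_unit_inverse)
  ultimately show "u * x \<in> translation_vectors L \<Gamma>" unfolding translation_vectors_def by simp
qed

end

section \<open>Representatives of the branch points\<close>

context torus_lattice
begin

lemma orbit_representatives_sign:
  "orbit_representatives {1, -1} L {frac_pt 2 1 0, frac_pt 2 0 1, frac_pt 2 1 1}"
  unfolding orbit_representatives_def
proof (intro conjI ballI impI)
  show "{frac_pt 2 1 0, frac_pt 2 0 1, frac_pt 2 1 1} \<subseteq> branch_lifts {1, -1} L"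
    unfolding branch_lifts_def by (auto simp: frac_pt_in_lattice_iff numeral_mult_frac_pt)
next
  fix z assume "z \<in> branch_lifts {1, -1} L"
  then have "z \<notin> L" "2 * z \<in> L" unfolding branch_lifts_def by auto
  then show "\<exists>r\<in>{frac_pt 2 1 0, frac_pt 2 0 1, frac_pt 2 1 1}. \<exists>u\<in>{1, -1}. z - u * r \<in> L"
    by (elim half_lattice_cases) auto
next
  fix r r' u
  assume "r \<in> {frac_pt 2 1 0, frac_pt 2 0 1, frac_pt 2 1 1}"
    "r' \<in> {frac_pt 2 1 0, frac_pt 2 0 1, frac_pt 2 1 1}"
    "u \<in> {1, -1}" "r - u * r' \<in> L"
  then show "r = r'" by (auto simp: frac_pt_diff frac_pt_add frac_pt_in_lattice_iff)
qed

end

locale eisenstein_lattice = torus_lattice a "a * \<omega>" for a \<omega> :: complex +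
  assumes cube_root: "\<omega>\<^sup>2 + \<omega> + 1 = 0"
begin

lemma omega_square: "\<omega>\<^sup>2 = - \<omega> - 1"
proof -
  have "\<omega>\<^sup>2 = (\<omega>\<^sup>2 + \<omega> + 1) - \<omega> - 1" by simp
  then show ?thesis unfolding cube_root by simp
qed

lemma omega_mult_frac_pt: "\<omega> * frac_pt d m n = frac_pt d (- n) (m - n)"
proof -
  have "\<omega> * (of_int m * a + of_int n * (a * \<omega>)) = of_int m * (a * \<omega>) + of_int n * a * \<omega>\<^sup>2"
    by (simp add: power2_eq_square algebra_simps)
  also have "\<dots> = of_int (- n) * a + of_int (m - n) * (a * \<omega>)"
    unfolding omega_square by (simp add: algebra_simps)
  finally show ?thesis unfolding frac_pt_def by simp
qed

lemma omega_cube: "\<omega> ^ 3 = 1"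
proof -
  have "\<omega> ^ 3 - 1 = (\<omega> - 1) * (\<omega>\<^sup>2 + \<omega> + 1)"
    by (simp add: power2_eq_square power3_eq_cube algebra_simps)
  then show ?thesis using cube_root by simp
qed

lemma omega_ne_one: "\<omega> \<noteq> 1"
  using cube_root by auto

lemma omega_mult_mem_iff: "\<omega> * x \<in> L \<longleftrightarrow> x \<in> L"
proof -
  have mem: "\<omega> * y \<in> L" if y: "y \<in> L" for y
  proof -
    obtain m n where "y = frac_pt 1 m n" by (rule frac_ptE[of 1 y]) (use y in simp_all)
    then show ?thesis by (simp add: omega_mult_frac_pt frac_pt_in_lattice_iff)
  qed
  have "\<omega> * (\<omega> * (\<omega> * x)) = \<omega> ^ 3 * x" by (simp add: power3_eq_cube mult.assoc)
  then have "\<omega> * (\<omega> * (\<omega> * x)) = x" unfolding omega_cube by simp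
  then show ?thesis using mem by metis
qed

lemma third_lattice_cases:
  assumes "(1 - \<omega>) * z \<in> L"
  obtains "z \<in> L" | "z - frac_pt 3 2 1 \<in> L" | "z - frac_pt 3 1 2 \<in> L"
proof -
  define w where "w = (1 - \<omega>) * z"
  have "(2 + \<omega>) * (1 - \<omega>) = 2 - \<omega> - \<omega>\<^sup>2" by (simp add: power2_eq_square algebra_simps)
  then have "of_int 3 * z = ((2 + \<omega>) * (1 - \<omega>)) * z" unfolding omega_square by simp
  also have "\<dots> = w + w + \<omega> * w" unfolding w_def by (simp add: algebra_simps)
  finally have z3: "of_int 3 * z \<in> L"
    using assms omega_mult_mem_iff lattice_add unfolding w_def by metis
  obtain m n where z: "z = frac_pt 3 m n" by (rule frac_ptE[of 3 z]) (use z3 in simp_all)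
  have "(1 - \<omega>) * z = frac_pt 3 (m + n) (2 * n - m)"
    unfolding z left_diff_distrib omega_mult_frac_pt by (simp add: frac_pt_diff)
  then have "3 dvd m + n" "3 dvd 2 * n - m" using assms by (simp_all add: frac_pt_in_lattice_iff)
  then have "(3 dvd m \<and> 3 dvd n) \<or> (3 dvd m - 2 \<and> 3 dvd n - 1) \<or> (3 dvd m - 1 \<and> 3 dvd n - 2)"
    by presburger
  then show thesis
    using that unfolding z by (simp add: frac_pt_diff frac_pt_in_lattice_iff) blast
qed

lemma cube_root_fixed_point_cases:
  assumes "u \<in> {\<omega>, \<omega>\<^sup>2}" "(1 - u) * z \<in> L" "z \<notin> L"
  obtains "z - frac_pt 3 2 1 \<in> L" | "z - frac_pt 3 1 2 \<in> L"
proof -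
  have "(1 - \<omega>) * z \<in> L"
  proof (cases "u = \<omega>")
    case False
    have "- (\<omega> * ((1 - \<omega>\<^sup>2) * z)) = \<omega> ^ 3 * z - \<omega> * z"
      by (simp add: power2_eq_square power3_eq_cube algebra_simps)
    then have "(1 - \<omega>) * z = - (\<omega> * ((1 - \<omega>\<^sup>2) * z))"
      unfolding omega_cube by (simp add: algebra_simps)
    moreover have "(1 - \<omega>\<^sup>2) * z \<in> L" using assms False by auto
    ultimately show ?thesis using omega_mult_mem_iff lattice_uminus by metis
  qed (use assms in simp)
  then show thesis using assms(3) that by (elim third_lattice_cases) auto
qed

lemma minus_omega_fixed_point:
  assumes "u \<in> {- \<omega>, - \<omega>\<^sup>2}" "(1 - u) * z \<in> L"
  shows "z \<in> L"
proof -
  have "1 + \<omega> = - \<omega>\<^sup>2" "1 + \<omega>\<^sup>2 = - \<omega>" unfolding omega_square by simp_all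
  then have "(1 - u) * z = - (\<omega> * (\<omega> * z)) \<or> (1 - u) * z = - (\<omega> * z)"
    using assms(1) by (auto simp: power2_eq_square mult.assoc)
  then show ?thesis using assms(2) omega_mult_mem_iff lattice_uminus by fastforce
qed

lemma third_point_cases:
  assumes "u \<in> {\<omega>, \<omega>\<^sup>2}" "(1 - u) * z \<in> L" "z \<notin> L"
  obtains v where "v \<in> {1, -1}" "z - v * frac_pt 3 2 1 \<in> L"
proof -
  have "frac_pt 3 2 1 = frac_pt 3 3 3 - frac_pt 3 1 2" by (simp add: frac_pt_diff)
  then have "z - (-1) * frac_pt 3 2 1 = (z - frac_pt 3 1 2) + frac_pt 3 3 3" by simp
  moreover have "frac_pt 3 3 3 \<in> L" by (simp add: frac_pt_in_lattice_iff)
  ultimately have "z - frac_pt 3 1 2 \<in> L \<Longrightarrow> z - (-1) * frac_pt 3 2 1 \<in> L"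
    using lattice_add by metis
  with assms that[of 1] that[of "-1"] show thesis by (elim cube_root_fixed_point_cases) auto
qed

lemma half_point_cases:
  assumes "2 * z \<in> L" "z \<notin> L"
  obtains u where "u \<in> {1, \<omega>, \<omega>\<^sup>2}" "z - u * frac_pt 2 1 0 \<in> L"
proof -
  have "\<omega>\<^sup>2 * frac_pt 2 1 0 = frac_pt 2 1 1 - frac_pt 2 2 2"
    by (simp add: power2_eq_square mult.assoc omega_mult_frac_pt frac_pt_diff)
  then have "z - \<omega>\<^sup>2 * frac_pt 2 1 0 = (z - frac_pt 2 1 1) + frac_pt 2 2 2" by simp
  moreover have "frac_pt 2 2 2 \<in> L" by (simp add: frac_pt_in_lattice_iff)
  ultimately have "z - frac_pt 2 1 1 \<in> L \<Longrightarrow> z - \<omega>\<^sup>2 * frac_pt 2 1 0 \<in> L"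
    using lattice_add by metis
  moreover have "\<omega> * frac_pt 2 1 0 = frac_pt 2 0 1" by (simp add: omega_mult_frac_pt)
  ultimately show thesis using assms that by (elim half_lattice_cases) force+
qed

lemma orbit_representatives_cube_roots:
  "orbit_representatives {1, \<omega>, \<omega>\<^sup>2} L {frac_pt 3 2 1, frac_pt 3 1 2}"
  unfolding orbit_representatives_def
proof (intro conjI ballI impI)
  show "{frac_pt 3 2 1, frac_pt 3 1 2} \<subseteq> branch_lifts {1, \<omega>, \<omega>\<^sup>2} L"
    unfolding branch_lifts_def using omega_ne_one
    by (auto simp: left_diff_distrib omega_mult_frac_pt frac_pt_diff frac_pt_in_lattice_iff)
next
  fix z assume "z \<in> branch_lifts {1, \<omega>, \<omega>\<^sup>2} L"
  then obtain u where "u \<in> {\<omega>, \<omega>\<^sup>2}" "(1 - u) * z \<in> L" "z \<notin> L"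
    unfolding branch_lifts_def by auto
  then show "\<exists>r\<in>{frac_pt 3 2 1, frac_pt 3 1 2}. \<exists>u\<in>{1, \<omega>, \<omega>\<^sup>2}. z - u * r \<in> L"
    by (elim cube_root_fixed_point_cases) auto
next
  fix r r' u
  assume "r \<in> {frac_pt 3 2 1, frac_pt 3 1 2}" "r' \<in> {frac_pt 3 2 1, frac_pt 3 1 2}"
    "u \<in> {1, \<omega>, \<omega>\<^sup>2}" "r - u * r' \<in> L"
  then show "r = r'"
    by (auto simp: power2_eq_square mult.assoc omega_mult_frac_pt frac_pt_diff
        frac_pt_in_lattice_iff)
qed

lemma orbit_representatives_sixth_roots:
  "orbit_representatives {1, \<omega>, \<omega>\<^sup>2, -1, - \<omega>, - \<omega>\<^sup>2} L {frac_pt 2 1 0, frac_pt 3 2 1}"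
  unfolding orbit_representatives_def
proof (intro conjI ballI impI)
  have "(1 - (-1)) * frac_pt 2 1 0 \<in> L" "(1 - \<omega>) * frac_pt 3 2 1 \<in> L"
    by (simp_all add: left_diff_distrib omega_mult_frac_pt numeral_mult_frac_pt frac_pt_diff
        frac_pt_in_lattice_iff)
  moreover have "frac_pt 2 1 0 \<notin> L" "frac_pt 3 2 1 \<notin> L" by (simp_all add: frac_pt_in_lattice_iff)
  ultimately have "frac_pt 2 1 0 \<in> branch_lifts {1, \<omega>, \<omega>\<^sup>2, -1, - \<omega>, - \<omega>\<^sup>2} L"
    "frac_pt 3 2 1 \<in> branch_lifts {1, \<omega>, \<omega>\<^sup>2, -1, - \<omega>, - \<omega>\<^sup>2} L"
    unfolding branch_lifts_def using omega_ne_one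
    by (intro CollectI conjI bexI[of _ "-1"] bexI[of _ \<omega>]; simp)+
  then show "{frac_pt 2 1 0, frac_pt 3 2 1} \<subseteq> branch_lifts {1, \<omega>, \<omega>\<^sup>2, -1, - \<omega>, - \<omega>\<^sup>2} L"
    by blast
next
  fix z assume "z \<in> branch_lifts {1, \<omega>, \<omega>\<^sup>2, -1, - \<omega>, - \<omega>\<^sup>2} L"
  then obtain u where u: "u \<in> {\<omega>, \<omega>\<^sup>2} \<or> u = -1 \<or> u \<in> {- \<omega>, - \<omega>\<^sup>2}"
    "(1 - u) * z \<in> L" "z \<notin> L"
    unfolding branch_lifts_def by blast
  moreover have "u \<notin> {- \<omega>, - \<omega>\<^sup>2}" using u(2,3) minus_omega_fixed_point by blast
  ultimately consider "u \<in> {\<omega>, \<omega>\<^sup>2}" | "2 * z \<in> L" by auto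
  then show "\<exists>r\<in>{frac_pt 2 1 0, frac_pt 3 2 1}. \<exists>u\<in>{1, \<omega>, \<omega>\<^sup>2, -1, - \<omega>, - \<omega>\<^sup>2}. z - u * r \<in> L"
  proof cases
    case 1
    then show ?thesis using u(2,3) by (elim third_point_cases) auto
  next
    case 2
    then show ?thesis using u(3) by (elim half_point_cases) auto
  qed
next
  fix r r' u
  assume "r \<in> {frac_pt 2 1 0, frac_pt 3 2 1}" "r' \<in> {frac_pt 2 1 0, frac_pt 3 2 1}"
    "u \<in> {1, \<omega>, \<omega>\<^sup>2, -1, - \<omega>, - \<omega>\<^sup>2}" "r - u * r' \<in> L"
  moreover have "frac_pt 2 m n = frac_pt 6 (3 * m) (3 * n)"
    and "frac_pt 3 m n = frac_pt 6 (2 * m) (2 * n)" for m n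
    using frac_pt_scale[of 3 2 m n] frac_pt_scale[of 2 3 m n] by simp_all
  ultimately show "r = r'"
    by (auto simp: power2_eq_square mult.assoc omega_mult_frac_pt frac_pt_diff frac_pt_add
        frac_pt_in_lattice_iff)
qed

text \<open>The rotation \<open>\<omega>\<close> permutes the three half periods cyclically.\<close>

lemma half_lattice_subset:
  assumes T: "L \<subseteq> T" "\<And>x y. x \<in> T \<Longrightarrow> y \<in> T \<Longrightarrow> x + y \<in> T" "\<And>x. x \<in> T \<Longrightarrow> \<omega> * x \<in> T"
    and s: "s \<in> T" "2 * s \<in> L" "s \<notin> L"
  shows "{z. 2 * z \<in> L} \<subseteq> T"
proof
  fix z assume z: "z \<in> {z. 2 * z \<in> L}"
  have rotate: "u * x \<in> X" if "u \<in> {1, \<omega>, \<omega>\<^sup>2}" "\<And>x. x \<in> X \<Longrightarrow> \<omega> * x \<in> X" "x \<in> X"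
    for u x X using that by (auto simp: power2_eq_square mult.assoc)
  show "z \<in> T"
  proof (cases "z \<in> L")
    case False
    obtain u v where uv: "u \<in> {1, \<omega>, \<omega>\<^sup>2}" "v \<in> {1, \<omega>, \<omega>\<^sup>2}"
      "z - u * frac_pt 2 1 0 \<in> L" "s - v * frac_pt 2 1 0 \<in> L"
      using half_point_cases z False s(2,3) by (metis mem_Collect_eq)
    have "(\<omega>\<^sup>2) ^ 3 = (\<omega> ^ 3)\<^sup>2" by (simp flip: power_mult)
    then have "v ^ 3 = 1" using uv(2) omega_cube by auto
    then have "z - u * (v * (v * s))
        = (z - u * frac_pt 2 1 0) - u * (v * (v * (s - v * frac_pt 2 1 0)))"
      by (simp add: power3_eq_cube algebra_simps)
    moreover have "u * (v * (v * (s - v * frac_pt 2 1 0))) \<in> L"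
      using rotate uv(1,2,4) omega_mult_mem_iff by metis
    ultimately have "z - u * (v * (v * s)) \<in> L" using uv(3) lattice_diff by metis
    moreover have "u * (v * (v * s)) \<in> T" using rotate uv(1,2) T(3) s(1) by metis
    ultimately show ?thesis using T(1,2) by (metis diff_add_cancel subsetD)
  qed (use T(1) in blast)
qed

lemma orbit_representatives_half_lattice:
  obtains R where "orbit_representatives {1, \<omega>, \<omega>\<^sup>2} {z. 2 * z \<in> L} R" "card R = 2"
proof -
  interpret H: eisenstein_lattice "a / 2" \<omega>
    using periods_indep cube_root by unfold_locales (auto simp: periods_indep_def)
  have "{z. 2 * z \<in> L} = H.L" using half_lattice_eq[of a "a * \<omega>"] by simp
  moreover have "card {H.frac_pt 3 2 1, H.frac_pt 3 1 2} = 2"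
    using H.frac_pt_inject[of 3 2 1 1 2] by simp
  ultimately show thesis using that H.orbit_representatives_cube_roots by metis
qed

end

locale gaussian_lattice = torus_lattice a "a * i" for a i :: complex +
  assumes square_root: "i\<^sup>2 = -1"
begin

lemma i_mult_frac_pt: "i * frac_pt d m n = frac_pt d (- n) m"
proof -
  have "i * (of_int m * a + of_int n * (a * i)) = of_int m * (a * i) + of_int n * a * i\<^sup>2"
    by (simp add: power2_eq_square algebra_simps)
  then show ?thesis unfolding frac_pt_def square_root by simp
qed

lemma i_mult_mem: "x \<in> L \<Longrightarrow> i * x \<in> L"
  by (rule frac_ptE[of 1 x]) (auto simp: i_mult_frac_pt frac_pt_in_lattice_iff)

lemma orbit_representatives_fourth_roots:
  "orbit_representatives {1, i, -1, - i} L {frac_pt 2 1 0, frac_pt 2 1 1}"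
  unfolding orbit_representatives_def
proof (intro conjI ballI impI)
  show "{frac_pt 2 1 0, frac_pt 2 1 1} \<subseteq> branch_lifts {1, i, -1, - i} L"
    unfolding branch_lifts_def by (auto simp: numeral_mult_frac_pt frac_pt_in_lattice_iff)
next
  fix z assume "z \<in> branch_lifts {1, i, -1, - i} L"
  then obtain u where u: "u \<in> {i, -1, - i}" "(1 - u) * z \<in> L" "z \<notin> L"
    unfolding branch_lifts_def by blast
  have "2 * z \<in> L"
  proof (cases "u = -1")
    case False
    define w where "w = (1 - u) * z"
    have "u\<^sup>2 = -1" using False u(1) square_root by auto
    moreover have "w + u * w = (1 - u\<^sup>2) * z"
      unfolding w_def by (simp add: power2_eq_square algebra_simps)
    ultimately have "2 * z = w + u * w" by simp
    moreover have "u * w \<in> L"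
      using False u(1) i_mult_mem[of w] lattice_uminus u(2) unfolding w_def by auto
    ultimately show ?thesis using u(2) lattice_add unfolding w_def by metis
  qed (use u in simp)
  moreover have "i * frac_pt 2 1 0 = frac_pt 2 0 1" by (simp add: i_mult_frac_pt)
  ultimately show "\<exists>r\<in>{frac_pt 2 1 0, frac_pt 2 1 1}. \<exists>u\<in>{1, i, -1, - i}. z - u * r \<in> L"
    using u(3) by (elim half_lattice_cases) force+
next
  fix r r' u
  assume "r \<in> {frac_pt 2 1 0, frac_pt 2 1 1}" "r' \<in> {frac_pt 2 1 0, frac_pt 2 1 1}"
    "u \<in> {1, i, -1, - i}" "r - u * r' \<in> L"
  then show "r = r'"
    by (auto simp: i_mult_frac_pt frac_pt_diff frac_pt_add frac_pt_in_lattice_iff)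
qed

end

section \<open>The four kinds of groups\<close>

context torus_lattice
begin

lemma branch_points_translations:
  assumes "\<Gamma> \<subseteq> transl L"
  shows "branch_points L \<Gamma> = {}"
proof (rule ccontr)
  assume "branch_points L \<Gamma> \<noteq> {}"
  then obtain P \<gamma> where "P \<in> torus L" "\<gamma> \<in> \<Gamma>" "\<gamma> \<noteq> idT L" "\<gamma> P = P"
    unfolding branch_points_def punctured_def by blast
  moreover obtain z where "P = coset L z" using \<open>P \<in> torus L\<close> by (rule torusE)
  moreover obtain b where "\<gamma> = aff L 1 b" using \<open>\<gamma> \<in> \<Gamma>\<close> assms unfolding transl_def by blast
  ultimately show False
    by (simp add: aff_coset coset_eq_iff idT_def aff_eq_iff lattice_unit_one)
qed

lemma rotation_group_powers:
  assumes "cyclic_of_order L G l" "G \<subseteq> Aut0 L"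
  obtains e where "lattice_unit L e" "G = (\<lambda>u. aff L u 0) ` range (\<lambda>k. e ^ k)"
    "e ^ l = 1" "l > 0" "\<And>j. 0 < j \<Longrightarrow> j < l \<Longrightarrow> e ^ j \<noteq> 1"
proof -
  obtain g where g: "g \<in> Aut L" "G = cyc L g" "card G = l"
    using assms(1) unfolding cyclic_of_order_def by blast
  then obtain e where e: "g = aff L e 0" "lattice_unit L e"
    using mem_cyc[OF g(1)] assms(2) unfolding Aut0_def by blast
  have G: "G = (\<lambda>u. aff L u 0) ` range (\<lambda>k. e ^ k)"
    unfolding g(2) e(1) cyc_def using aff_power[OF e(2)] by auto
  have "inj_on (\<lambda>u. aff L u 0) (range (\<lambda>k. e ^ k))"
    using lattice_unit_power[OF e(2)] by (auto intro!: inj_onI simp: aff_eq_iff)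
  then have "card (range (\<lambda>k. e ^ k)) = l" using G g(3) card_image by metis
  moreover obtain n where "n > 0" "e ^ n = 1" using e(2) unfolding lattice_unit_def by blast
  ultimately show thesis using that[OF e(2) G] card_range_power by metis
qed

lemma eisenstein_basis:
  assumes "lattice_unit L \<omega>" "\<omega>\<^sup>2 + \<omega> + 1 = 0"
  obtains a where "eisenstein_lattice a \<omega>" "lattice a (a * \<omega>) = L"
proof -
  have "\<omega>\<^sup>2 = of_real (-1) * \<omega> - 1"
    using assms(2) by (simp add: eq_neg_iff_add_eq_0 algebra_simps)
  then have "Im \<omega> \<noteq> 0" "cmod \<omega> = 1" "\<bar>Re \<omega>\<bar> \<le> 1/2"
    using quadratic_unit_root[of \<omega> "-1"] by auto
  then obtain a where "periods_indep a (a * \<omega>)" "lattice a (a * \<omega>) = L"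
    using lattice_unit_basis[OF assms(1)] by blast
  then show thesis
    using that assms(2) by (blast intro: eisenstein_lattice.intro torus_lattice.intro
        eisenstein_lattice_axioms.intro)
qed

lemma gaussian_basis:
  assumes "lattice_unit L i" "i\<^sup>2 = -1"
  obtains a where "gaussian_lattice a i" "lattice a (a * i) = L"
proof -
  have "i\<^sup>2 = of_real 0 * i - 1" using assms(2) by simp
  then have "Im i \<noteq> 0" "cmod i = 1" "\<bar>Re i\<bar> \<le> 1/2" using quadratic_unit_root[of i 0] by auto
  then obtain a where "periods_indep a (a * i)" "lattice a (a * i) = L"
    using lattice_unit_basis[OF assms(1)] by blast
  then show thesis
    using that assms(2) by (blast intro: gaussian_lattice.intro torus_lattice.intro
        gaussian_lattice_axioms.intro)
qed

lemma orbit_representatives_order3: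
  assumes e: "lattice_unit L e" "e ^ 3 = 1" "e \<noteq> 1"
  obtains R where "orbit_representatives (range (\<lambda>k. e ^ k)) L R" "card R = 2"
proof -
  obtain a where E: "eisenstein_lattice a e" and La: "lattice a (a * e) = L"
    using eisenstein_basis[OF e(1) cube_root_of_unity[OF e(2,3)]] by blast
  interpret E: eisenstein_lattice a e by (rule E)
  have "range (\<lambda>k. e ^ k) = {1, e, e\<^sup>2}"
    using range_power_eq[OF e(2)] by (auto simp: lessThan_nat_numeral)
  moreover have "card {E.frac_pt 3 2 1, E.frac_pt 3 1 2} = 2" by (simp add: E.frac_pt_inject)
  ultimately show thesis using that E.orbit_representatives_cube_roots unfolding La by metis
qed

lemma orbit_representatives_order4:
  assumes e: "lattice_unit L e" "e ^ 4 = 1" "e\<^sup>2 \<noteq> 1"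
  obtains R where "orbit_representatives (range (\<lambda>k. e ^ k)) L R" "card R = 2"
proof -
  have "(e\<^sup>2)\<^sup>2 = 1" using e(2) by (simp flip: power_mult)
  then have e2: "e\<^sup>2 = -1" using square_root_of_unity e(3) by blast
  then obtain a where G: "gaussian_lattice a e" and La: "lattice a (a * e) = L"
    using gaussian_basis e(1) by blast
  interpret G: gaussian_lattice a e by (rule G)
  have "e ^ 3 = - e" using e2 by (simp add: power3_eq_cube power2_eq_square mult.assoc[symmetric])
  then have "range (\<lambda>k. e ^ k) = {1, e, -1, - e}"
    using range_power_eq[OF e(2)] e2 by (auto simp: lessThan_nat_numeral)
  moreover have "card {G.frac_pt 2 1 0, G.frac_pt 2 1 1} = 2" by (simp add: G.frac_pt_inject)
  ultimately show thesis using that G.orbit_representatives_fourth_roots unfolding La by metis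
qed

lemma orbit_representatives_order6:
  assumes e: "lattice_unit L e" "e ^ 6 = 1" "e\<^sup>2 \<noteq> 1" "e ^ 3 \<noteq> 1"
  obtains R where "orbit_representatives (range (\<lambda>k. e ^ k)) L R" "card R = 2"
proof -
  define \<omega> where "\<omega> = e\<^sup>2"
  have "(e ^ 3)\<^sup>2 = 1" "\<omega> ^ 3 = 1" using e(2) unfolding \<omega>_def by (simp_all flip: power_mult)
  then have e3: "e ^ 3 = -1" and "\<omega>\<^sup>2 + \<omega> + 1 = 0"
    using square_root_of_unity cube_root_of_unity e(3,4) unfolding \<omega>_def by blast+
  moreover have "lattice_unit L \<omega>" unfolding \<omega>_def using e(1) by (rule lattice_unit_power)
  ultimately obtain a where E: "eisenstein_lattice a \<omega>" and La: "lattice a (a * \<omega>) = L"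
    using eisenstein_basis by blast
  interpret E: eisenstein_lattice a \<omega> by (rule E)
  have e4: "e ^ 4 = \<omega>\<^sup>2" unfolding \<omega>_def by (simp flip: power_mult)
  have "e ^ 5 = e ^ 3 * e\<^sup>2" "e ^ 4 = e ^ 3 * e"
    using power_add[of e 3 2] power_add[of e 3 1] by simp_all
  then have e5: "e ^ 5 = - \<omega>" and "\<omega>\<^sup>2 = - e" unfolding e3 e4 \<omega>_def by simp_all
  have "{..<6::nat} = {0, 1, 2, 3, 4, 5}" by auto
  then have "range (\<lambda>k. e ^ k) = {e ^ 0, e ^ 1, e\<^sup>2, e ^ 3, e ^ 4, e ^ 5}"
    using range_power_eq[OF e(2)] by simp
  also have "\<dots> = {1, e, \<omega>, -1, \<omega>\<^sup>2, - \<omega>}"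
    unfolding e3 e4 e5 \<omega>_def[symmetric] by simp
  finally have "range (\<lambda>k. e ^ k) = {1, \<omega>, \<omega>\<^sup>2, -1, - \<omega>, - \<omega>\<^sup>2}"
    using \<open>\<omega>\<^sup>2 = - e\<close> by auto
  moreover have "card {E.frac_pt 2 1 0, E.frac_pt 3 2 1} = 2"
    using E.frac_pt_scale[of 3 2 1 0] E.frac_pt_scale[of 2 3 2 1] E.frac_pt_inject[of 6 3 0 4 2]
    by simp
  ultimately show thesis using that E.orbit_representatives_sixth_roots unfolding La by metis
qed

lemma rotation_orbit_representatives:
  assumes e: "lattice_unit L e" "e ^ l = 1" "\<And>j. 0 < j \<Longrightarrow> j < l \<Longrightarrow> e ^ j \<noteq> 1"
    and l: "l \<in> {3, 4, 6}"
  obtains R where "orbit_representatives (range (\<lambda>k. e ^ k)) L R" "card R = 2"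
proof -
  from l consider "l = 3" | "l = 4" | "l = 6" by blast
  then show thesis
  proof cases
    case 1
    then show ?thesis using orbit_representatives_order3[OF e(1)] e(2) e(3)[of 1] that by auto
  next
    case 2
    then show ?thesis using orbit_representatives_order4[OF e(1)] e(2) e(3)[of 2] that by auto
  next
    case 3
    then show ?thesis
      using orbit_representatives_order6[OF e(1)] e(2) e(3)[of 2] e(3)[of 3] that by auto
  qed
qed

lemma card_branch_points_rotations:
  assumes \<Gamma>: "aut_subgroup L \<Gamma>" and "l \<in> {3, 4, 6}" "cyclic_of_order L G l"
    and sd: "semidir L \<Gamma> G {idT L}"
  shows "card (branch_points L \<Gamma>) = 2"
proof -
  obtain e where e: "lattice_unit L e" "G = (\<lambda>u. aff L u 0) ` range (\<lambda>k. e ^ k)"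
    "e ^ l = 1" "\<And>j. 0 < j \<Longrightarrow> j < l \<Longrightarrow> e ^ j \<noteq> 1"
    using rotation_group_powers[OF assms(3) semidirD(1)[OF sd]] by blast
  interpret affine_group_data p q "range (\<lambda>k. e ^ k)" L
    using affine_group_data_lattice[OF e(1)] lattice_unit_mult_mem[OF e(1)] by blast
  have "\<Gamma> = aff_group L (range (\<lambda>k. e ^ k)) L"
  proof (rule aff_group_eq_generated[OF \<Gamma> semidirD(3)[OF sd]])
    show "G \<union> {idT L} \<subseteq> aff_group L (range (\<lambda>k. e ^ k)) L"
      unfolding e(2) aff_group_def idT_def using one_mem zero_in_lattice by blast
    show "aff L u 0 \<in> \<Gamma>" if "u \<in> range (\<lambda>k. e ^ k)" for u
      using that e(2) semidirD(4)[OF sd] by blast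
  qed (rule translation_vectors_subgroup(1)[OF \<Gamma>])
  moreover obtain R where "orbit_representatives (range (\<lambda>k. e ^ k)) L R" "card R = 2"
    using rotation_orbit_representatives[OF e(1,3,4) assms(2)] by blast
  ultimately show ?thesis using card_branch_points_aff_group by simp
qed

lemma klein_four_translations:
  assumes "klein_four L K" "K \<subseteq> transl L"
  obtains s where "aff L 1 s \<in> K" "2 * s \<in> L" "s \<notin> L" "K \<subseteq> aff_group L {1} {z. 2 * z \<in> L}"
proof -
  obtain f g where K: "K = {idT L, f, g, compT L f g}" "card K = 4"
    "compT L f f = idT L" "compT L g g = idT L"
    using assms(1) unfolding klein_four_def by blast
  obtain s t where st: "f = aff L 1 s" "g = aff L 1 t"
    using assms(2) K(1) unfolding transl_def by blast
  have "s + s \<in> L" "t + t \<in> L"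
    using K(3,4) unfolding st idT_def by (simp_all add: compT_aff lattice_unit_one aff_eq_iff)
  then have two: "2 * s \<in> L" "2 * t \<in> L" "2 * (s + t) \<in> L"
    using lattice_add[of "s + s" a b "t + t" for a b] by (simp_all add: mult_2 algebra_simps)
  have "s \<notin> L"
  proof
    assume "s \<in> L"
    then have "f = idT L" unfolding st idT_def by (simp add: aff_eq_iff lattice_unit_one)
    then have "card K \<le> 3" unfolding K(1) by (simp add: card_insert_if)
    then show False using K(2) by simp
  qed
  moreover have "K \<subseteq> aff_group L {1} {z. 2 * z \<in> L}"
    using two zero_in_lattice unfolding K(1) st aff_group_def idT_def
    by (auto simp: compT_aff lattice_unit_one add.commute)
  ultimately show thesis using that two(1) K(1) st(1) by blast
qed

lemma affine_group_data_half_lattice: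
  assumes "lattice_unit L e"
  shows "affine_group_data p q (range (\<lambda>k. e ^ k)) {z. 2 * z \<in> L}"
  unfolding half_lattice_eq
proof (rule affine_group_data_lattice[OF assms])
  show "L \<subseteq> lattice (p / 2) (q / 2)"
    using lattice_of_int_mult[of _ p q 2] by (auto simp flip: half_lattice_eq)
  show "e * x \<in> lattice (p / 2) (q / 2)" if "x \<in> lattice (p / 2) (q / 2)" for x
    using that lattice_unit_mult_mem[OF assms, of "2 * x"]
    by (auto simp: mult.left_commute simp flip: half_lattice_eq)
qed

lemma half_lattice_translation_vectors:
  assumes \<Gamma>: "aut_subgroup L \<Gamma>" and E: "eisenstein_lattice a e" "lattice a (a * e) = L"
    and e: "lattice_unit L e" "aff L e 0 \<in> \<Gamma>" and s: "aff L 1 s \<in> \<Gamma>" "2 * s \<in> L" "s \<notin> L"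
  shows "{z. 2 * z \<in> L} \<subseteq> translation_vectors L \<Gamma>"
proof (rule eisenstein_lattice.half_lattice_subset[OF E(1), unfolded E(2)])
  show "x + y \<in> translation_vectors L \<Gamma>"
    if "x \<in> translation_vectors L \<Gamma>" "y \<in> translation_vectors L \<Gamma>" for x y
    using translation_vectors_subgroup(2)[OF \<Gamma> that] .
  show "e * x \<in> translation_vectors L \<Gamma>" if "x \<in> translation_vectors L \<Gamma>" for x
    using translation_vectors_subgroup(4)[OF \<Gamma> e that] .
  show "s \<in> translation_vectors L \<Gamma>" using s(1) unfolding translation_vectors_def by blast
qed (use translation_vectors_subgroup(1)[OF \<Gamma>] s(2,3) in auto)

lemma card_branch_points_C3_Klein:
  assumes \<Gamma>: "aut_subgroup L \<Gamma>" and "cyclic_of_order L G 3" "klein_four L K"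
    and sd: "semidir L \<Gamma> G K"
  shows "card (branch_points L \<Gamma>) = 2"
proof -
  obtain e where e: "lattice_unit L e" "G = (\<lambda>u. aff L u 0) ` range (\<lambda>k. e ^ k)"
    "e ^ 3 = 1" "\<And>j. 0 < j \<Longrightarrow> j < 3 \<Longrightarrow> e ^ j \<noteq> 1"
    using rotation_group_powers[OF assms(2) semidirD(1)[OF sd]] by blast
  have "e \<noteq> 1" using e(4)[of 1] by simp
  then obtain a where E: "eisenstein_lattice a e" and La: "lattice a (a * e) = L"
    using eisenstein_basis[OF e(1) cube_root_of_unity[OF e(3)]] by blast
  obtain s where s: "aff L 1 s \<in> K" "2 * s \<in> L" "s \<notin> L" "K \<subseteq> aff_group L {1} {z. 2 * z \<in> L}"
    using klein_four_translations[OF assms(3) semidirD(2)[OF sd]] by blast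
  interpret affine_group_data p q "range (\<lambda>k. e ^ k)" "{z. 2 * z \<in> L}"
    by (rule affine_group_data_half_lattice[OF e(1)])
  have rot: "aff L u 0 \<in> \<Gamma>" if "u \<in> range (\<lambda>k. e ^ k)" for u
    using that e(2) semidirD(4)[OF sd] by blast
  have "\<Gamma> = aff_group L (range (\<lambda>k. e ^ k)) {z. 2 * z \<in> L}"
  proof (rule aff_group_eq_generated[OF \<Gamma> semidirD(3)[OF sd] _ rot])
    have "G \<subseteq> aff_group L (range (\<lambda>k. e ^ k)) {z. 2 * z \<in> L}"
      using zero_in_lattice[of p q] unfolding e(2) aff_group_def by force
    then show "G \<union> K \<subseteq> aff_group L (range (\<lambda>k. e ^ k)) {z. 2 * z \<in> L}"
      using s(4) one_mem unfolding aff_group_def by blast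
    have "aff L e 0 \<in> \<Gamma>" using rot[of e] by (metis power_one_right rangeI)
    then show "{z. 2 * z \<in> L} \<subseteq> translation_vectors L \<Gamma>"
      using half_lattice_translation_vectors[OF \<Gamma> E La e(1)] s(1-3) semidirD(5)[OF sd] by blast
  qed
  moreover have "range (\<lambda>k. e ^ k) = {1, e, e\<^sup>2}"
    using range_power_eq[OF e(3)] by (auto simp: lessThan_nat_numeral)
  moreover obtain R where "orbit_representatives {1, e, e\<^sup>2} {z. 2 * z \<in> L} R" "card R = 2"
    using eisenstein_lattice.orbit_representatives_half_lattice[OF E] unfolding La by blast
  ultimately show ?thesis using card_branch_points_aff_group by simp
qed

lemma finite_translation_cycle:
  assumes "cyclic_of_order L K N" "K \<subseteq> transl L"
  obtains b d where "K = range (\<lambda>k. aff L 1 (of_nat k * b))" "d > 0" "of_int d * b \<in> L"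
proof -
  obtain t where t: "t \<in> Aut L" "K = cyc L t" "finite K"
    using assms(1) unfolding cyclic_of_order_def by blast
  then obtain b where b: "t = aff L 1 b" using mem_cyc assms(2) unfolding transl_def by blast
  have K: "K = range (\<lambda>k. aff L 1 (of_nat k * b))"
    unfolding t(2) b cyc_def transl_power by auto
  then have "\<not> inj (\<lambda>k::nat. aff L 1 (of_nat k * b))"
    using t(3) finite_imageD infinite_UNIV_nat by metis
  then obtain i j :: nat where "i < j" "aff L 1 (of_nat i * b) = aff L 1 (of_nat j * b)"
    unfolding inj_def by (metis linorder_neqE_nat)
  then have "of_nat i * b - of_nat j * b \<in> L" "int j - int i > 0"
    by (simp_all add: aff_eq_iff lattice_unit_one)
  moreover have "of_int (int j - int i) * b = - (of_nat i * b - of_nat j * b)"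
    by (simp add: algebra_simps)
  ultimately have "of_int (int j - int i) * b \<in> L" "int j - int i > 0"
    using lattice_uminus by metis+
  then show thesis using that K by blast
qed

lemma intermediate_lattice:
  assumes B: "L \<subseteq> B" "\<And>x y. x \<in> B \<Longrightarrow> y \<in> B \<Longrightarrow> x - y \<in> B"
    and d: "d > 0" "\<And>x. x \<in> B \<Longrightarrow> of_int d * x \<in> L"
  obtains b1 b2 where "periods_indep b1 b2" "lattice b1 b2 = B"
proof -
  have mult: "of_int k * x \<in> B" if "x \<in> B" for k x
    using of_int_mult_closed[of B] B zero_in_lattice that by blast
  have add: "x + y \<in> B" if "x \<in> B" "y \<in> B" for x y
    using B(2)[OF that(1) B(2)[OF B(2)[OF that(2) that(2)] that(2)]] by simp
  define A1 where "A1 = {m. \<exists>n. frac_pt d m n \<in> B}"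
  define A2 where "A2 = {n. frac_pt d 0 n \<in> B}"
  have "frac_pt d d 0 = p" "frac_pt d 0 d = q" using d(1) by (simp_all add: frac_pt_def)
  then have "frac_pt d d 0 \<in> B" "frac_pt d 0 d \<in> B" using B(1) periods_in_lattice by auto
  then have "d \<in> A1" "d \<in> A2" unfolding A1_def A2_def by blast+
  moreover have diff: "frac_pt d (m - m') (n - n') \<in> B" if "frac_pt d m n \<in> B" "frac_pt d m' n' \<in> B"
    for m n m' n' using B(2)[OF that] by (simp add: frac_pt_diff)
  then have "x - y \<in> A1" if "x \<in> A1" "y \<in> A1" for x y using that unfolding A1_def by blast
  moreover have "x - y \<in> A2" if "x \<in> A2" "y \<in> A2" for x y
    using that diff[of 0 x 0 y] unfolding A2_def by simp
  ultimately obtain g1 g2 where g1: "g1 > 0" "g1 \<in> A1" "\<And>m. m \<in> A1 \<Longrightarrow> g1 dvd m"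
    and g2: "g2 > 0" "g2 \<in> A2" "\<And>n. n \<in> A2 \<Longrightarrow> g2 dvd n"
    using int_subgroup_generator[of A1 d] int_subgroup_generator[of A2 d] d(1) by metis
  obtain n1 where n1: "frac_pt d g1 n1 \<in> B" using g1(2) unfolding A1_def by blast
  have "x \<in> lattice (frac_pt d g1 n1) (frac_pt d 0 g2)" if xB: "x \<in> B" for x
  proof -
    obtain m n where x: "x = frac_pt d m n" by (rule frac_ptE[of d x]) (use d xB in auto)
    then obtain j where m: "m = g1 * j" using g1(3) xB unfolding A1_def by blast
    have "x - of_int j * frac_pt d g1 n1 = frac_pt d 0 (n - j * n1)"
      unfolding x m by (simp add: of_int_mult_frac_pt frac_pt_diff algebra_simps)
    moreover have "x - of_int j * frac_pt d g1 n1 \<in> B" using B(2) mult n1 xB by blast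
    ultimately obtain i where "n - j * n1 = g2 * i"
      using g2(3) unfolding A2_def by (metis dvdE mem_Collect_eq)
    then have "x = of_int j * frac_pt d g1 n1 + of_int i * frac_pt d 0 g2"
      unfolding x m by (simp add: of_int_mult_frac_pt frac_pt_add algebra_simps)
    then show ?thesis by (rule lattice_memI)
  qed
  moreover have "lattice (frac_pt d g1 n1) (frac_pt d 0 g2) \<subseteq> B"
    using n1 g2(2) mult add unfolding A2_def by (auto elim!: lattice_memE)
  ultimately show thesis
    using that periods_indep_frac_pt g1(1) g2(1) d(1) by (metis less_irrefl subset_antisym subsetI)
qed

lemma lattice_extension:
  assumes "d > 0" "of_int d * b \<in> L"
  obtains b1 b2 where "periods_indep b1 b2" "lattice b1 b2 = {l + of_int k * b | l k. l \<in> L}"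
proof (rule intermediate_lattice[of _ d])
  show "L \<subseteq> {l + of_int k * b | l k. l \<in> L}" by force
  show "x - y \<in> {l + of_int k * b | l k. l \<in> L}"
    if x: "x \<in> {l + of_int k * b | l k. l \<in> L}" and y: "y \<in> {l + of_int k * b | l k. l \<in> L}" for x y
  proof -
    obtain l k l' k' where "x = l + of_int k * b" "y = l' + of_int k' * b" "l \<in> L" "l' \<in> L"
      using x y by blast
    then show ?thesis by (intro CollectI exI[of _ "l - l'"] exI[of _ "k - k'"])
      (simp add: lattice_diff algebra_simps)
  qed
  show "of_int d * x \<in> L" if x: "x \<in> {l + of_int k * b | l k. l \<in> L}" for x
  proof -
    obtain l k where "x = l + of_int k * b" "l \<in> L" using x by blast
    then have "of_int d * x = of_int d * l + of_int k * (of_int d * b)" by (simp add: algebra_simps)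
    then show ?thesis using \<open>l \<in> L\<close> assms(2) by (simp add: lattice_add lattice_of_int_mult)
  qed
qed (use assms that in auto)

lemma lattice_extension_translation_vectors:
  assumes \<Gamma>: "aut_subgroup L \<Gamma>" and "aff L 1 b \<in> \<Gamma>"
  shows "{l + of_int k * b | l k. l \<in> L} \<subseteq> translation_vectors L \<Gamma>"
proof -
  note T = translation_vectors_subgroup[OF \<Gamma>]
  have "x - y \<in> translation_vectors L \<Gamma>"
    if "x \<in> translation_vectors L \<Gamma>" "y \<in> translation_vectors L \<Gamma>" for x y
    using T(2)[OF that(1) T(3)[OF that(2)]] by simp
  then have "of_int k * b \<in> translation_vectors L \<Gamma>" for k
    using of_int_mult_closed[of "translation_vectors L \<Gamma>"] T(1) zero_in_lattice assms(2)
    unfolding translation_vectors_def by blast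
  then show ?thesis using T(1,2) by blast
qed

lemma card_branch_points_C2:
  assumes \<Gamma>: "aut_subgroup L \<Gamma>" and "cyclic_of_order L G 2" "cyclic_of_order L K N"
    and sd: "semidir L \<Gamma> G K"
  shows "card (branch_points L \<Gamma>) = 3"
proof -
  obtain e where e: "lattice_unit L e" "G = (\<lambda>u. aff L u 0) ` range (\<lambda>k. e ^ k)"
    "e\<^sup>2 = 1" "\<And>j. 0 < j \<Longrightarrow> j < 2 \<Longrightarrow> e ^ j \<noteq> 1"
    using rotation_group_powers[OF assms(2) semidirD(1)[OF sd]] by blast
  then have "e = -1" using square_root_of_unity e(4)[of 1] by simp
  obtain b d where K: "K = range (\<lambda>k. aff L 1 (of_nat k * b))" "d > 0" "of_int d * b \<in> L"
    using finite_translation_cycle[OF assms(3) semidirD(2)[OF sd]] by blast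
  define B where "B = {l + of_int k * b | l k. l \<in> L}"
  obtain b1 b2 where M: "periods_indep b1 b2" "lattice b1 b2 = B"
    using lattice_extension[OF K(2,3)] unfolding B_def by blast
  interpret M: torus_lattice b1 b2 by (rule torus_lattice.intro[OF M(1)])
  have "L \<subseteq> B" unfolding B_def by force
  interpret affine_group_data p q "range (\<lambda>k. e ^ k)" B
    unfolding M(2)[symmetric]
    by (rule affine_group_data_lattice[OF e(1)]) (use \<open>L \<subseteq> B\<close> M(2) \<open>e = -1\<close> in
      \<open>auto intro: lattice_uminus\<close>)
  have "aff L 1 b \<in> K" unfolding K(1) by (rule range_eqI[of _ _ 1]) simp
  have "\<Gamma> = aff_group L (range (\<lambda>k. e ^ k)) B"
  proof (rule aff_group_eq_generated[OF \<Gamma> semidirD(3)[OF sd]])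
    have "of_nat k * b \<in> B" for k :: nat
      unfolding B_def using zero_in_lattice[of p q]
      by (metis (mono_tags, lifting) add_0 mem_Collect_eq of_int_of_nat_eq)
    then show "G \<union> K \<subseteq> aff_group L (range (\<lambda>k. e ^ k)) B"
      using one_mem zero_in_lattice \<open>L \<subseteq> B\<close> unfolding e(2) K(1) aff_group_def by fastforce
    show "aff L u 0 \<in> \<Gamma>" if "u \<in> range (\<lambda>k. e ^ k)" for u
      using that e(2) semidirD(4)[OF sd] by blast
    show "B \<subseteq> translation_vectors L \<Gamma>"
      using lattice_extension_translation_vectors[OF \<Gamma>] \<open>aff L 1 b \<in> K\<close> semidirD(5)[OF sd]
      unfolding B_def by blast
  qed
  moreover have "range (\<lambda>k. e ^ k) = {1, -1}"
    using range_power_eq[OF e(3)] \<open>e = -1\<close> by (auto simp: lessThan_nat_numeral)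
  moreover have "card {M.frac_pt 2 1 0, M.frac_pt 2 0 1, M.frac_pt 2 1 1} = 3"
    by (simp add: M.frac_pt_inject)
  ultimately show ?thesis
    using card_branch_points_aff_group M.orbit_representatives_sign unfolding M(2) by simp
qed

end

theorem lemma4p6:
  fixes \<omega>1 \<omega>2 :: complex and \<Gamma> :: "(complex set \<Rightarrow> complex set) set"
  defines "L \<equiv> lattice \<omega>1 \<omega>2"
  assumes "periods_indep \<omega>1 \<omega>2"
    and "aut_subgroup L \<Gamma>" and "finite \<Gamma>"
  shows "(\<Gamma> \<subseteq> transl L \<longrightarrow> card (branch_points L \<Gamma>) = 0)
    \<and> (((\<exists>G l. l \<in> {3, 4, 6} \<and> cyclic_of_order L G l \<and> semidir L \<Gamma> G {idT L})
         \<or> (\<exists>G K. cyclic_of_order L G 3 \<and> klein_four L K \<and> semidir L \<Gamma> G K))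
        \<longrightarrow> card (branch_points L \<Gamma>) = 2)
    \<and> ((\<exists>G K N. N \<ge> 1 \<and> cyclic_of_order L G 2 \<and> cyclic_of_order L K N \<and> semidir L \<Gamma> G K)
        \<longrightarrow> card (branch_points L \<Gamma>) = 3)"
proof -
  interpret T: torus_lattice \<omega>1 \<omega>2 by (rule torus_lattice.intro) (rule assms(2))
  have \<Gamma>: "aut_subgroup (lattice \<omega>1 \<omega>2) \<Gamma>" using assms(3) unfolding L_def .
  show ?thesis
    using T.branch_points_translations T.card_branch_points_rotations[OF \<Gamma>]
      T.card_branch_points_C3_Klein[OF \<Gamma>] T.card_branch_points_C2[OF \<Gamma>]
    unfolding L_def by auto
qed

end
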